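(* Let $\alpha>1$, $\lambda\in[0,\infty)^d$, $i\in[d]$, and suppose $\lambda_i$ is the $\sigma_i$-th smallest among $\lambda_1,\dots,\lambda_d$ (ties broken arbitrarily). Then $$\frac{J_i(\lambda;\mathcal{F}_\alpha)}{\phi_i(\lambda;\mathcal{F}_\alpha)}\le\left(\frac{(\sigma_i\wedge m)+\frac1\alpha}{(\sigma_i-m+1)\vee1}\right)^{\frac1\alpha}\quad\text{and}\quad\frac{J_i(\lambda;\mathcal{P}_\alpha)}{\phi_i(\lambda;\mathcal{P}_\alpha)}\le\frac{2\alpha}{\alpha+1}\left(\frac{(\sigma_i\wedge m)+\frac1\alpha}{\sigma_i}\right)^{\frac1\alpha}.$$
   Context: Integers $1\le m\le d$; $a\wedge b=\min$, $a\vee b=\max$. Fréchet $\mathcal{F}_\alpha$: CDF $F(x)=e^{-1/x^\alpha}$, density $f(x)=\alpha x^{-(\alpha+1)}e^{-1/x^\alpha}$, $x\ge0$, left endpoint $\nu=0$; Pareto $\mathcal{P}_\alpha$: $F(x)=1-x^{-\alpha}$, $f(x)=\alpha x^{-(\alpha+1)}$, $x\ge1$, $\nu=1$. For $\mathcal{D}\in\{\mathcal{F}_\alpha,\mathcal{P}_\alpha\}$ and $\lambda\in[0,\infty)^d$, let $r$ have i.i.d. coordinates from $\mathcal{D}$; $\phi_i(\lambda;\mathcal{D})$ is the probability that $r_i-\lambda_i$ is among the $m$ largest of $\{r_j-\lambda_j:j\in[d]\}$, i.e. $$\phi_i(\lambda;\mathcal{D})=\sum_{\theta=1}^m\int_{\nu-\lambda_i}^\infty\sum_{S\subseteq[d]\setminus\{i\},|S|=\theta-1}\prod_{j\in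 S}(1-F(z+\lambda_j))\prod_{j\notin S\cup\{i\}}F(z+\lambda_j)\,f(z+\lambda_i)\,dz,$$ and $J_i(\lambda;\mathcal{D})$ is the same expression with the extra factor $\frac1{z+\lambda_i}$ in the integrand (equivalently $J_i(\lambda;\mathcal{D})=\mathbb{E}[\mathbf 1\{r_i-\lambda_i \text{ among the } m \text{ largest}\}/r_i]$). *)

theory Defs
  imports "HOL-Analysis.Analysis"
begin

text \<open>Coordinates are indexed by {..<d} (i.e. 0,...,d-1) instead of 1,...,d.
  CDFs and densities are extended to all of the real line (0 below the support).\<close>

definition frechet_cdf :: "real \<Rightarrow> real \<Rightarrow> real" where
  "frechet_cdf \<alpha> x = (if x > 0 then exp (- (x powr (-\<alpha>))) else 0)"

definition frechet_pdf :: "real \<Rightarrow> real \<Rightarrow> real" where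
  "frechet_pdf \<alpha> x = (if x > 0 then \<alpha> * x powr (-(\<alpha> + 1)) * exp (- (x powr (-\<alpha>))) else 0)"

definition pareto_cdf :: "real \<Rightarrow> real \<Rightarrow> real" where
  "pareto_cdf \<alpha> x = (if x \<ge> 1 then 1 - x powr (-\<alpha>) else 0)"

definition pareto_pdf :: "real \<Rightarrow> real \<Rightarrow> real" where
  "pareto_pdf \<alpha> x = (if x \<ge> 1 then \<alpha> * x powr (-(\<alpha> + 1)) else 0)"

text \<open>Integrand of phi_i (without the density/extra factor): probability that
  exactly theta-1 of the other coordinates exceed level z, summed over theta = 1..m.\<close>
definition topm_weight ::
  "(real \<Rightarrow> real) \<Rightarrow> nat \<Rightarrow> nat \<Rightarrow> (nat \<Rightarrow> real) \<Rightarrow> nat \<Rightarrow> real \<Rightarrow> real" where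
  "topm_weight F d m lam i z =
     (\<Sum>\<theta>\<in>{1..m}. \<Sum>S\<in>{S. S \<subseteq> {..<d} - {i} \<and> card S = \<theta> - 1}.
        (\<Prod>j\<in>S. 1 - F (z + lam j)) * (\<Prod>j\<in>{..<d} - S - {i}. F (z + lam j)))"

definition phi_gen ::
  "(real \<Rightarrow> real) \<Rightarrow> (real \<Rightarrow> real) \<Rightarrow> real \<Rightarrow> nat \<Rightarrow> nat \<Rightarrow> (nat \<Rightarrow> real) \<Rightarrow> nat \<Rightarrow> real" where
  "phi_gen F f \<nu> d m lam i =
     (LINT z:{\<nu> - lam i..}|lborel. topm_weight F d m lam i z * f (z + lam i))"

definition J_gen ::
  "(real \<Rightarrow> real) \<Rightarrow> (real \<Rightarrow> real) \<Rightarrow> real \<Rightarrow> nat \<Rightarrow> nat \<Rightarrow> (nat \<Rightarrow> real) \<Rightarrow> nat \<Rightarrow> real" where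
  "J_gen F f \<nu> d m lam i =
     (LINT z:{\<nu> - lam i..}|lborel. topm_weight F d m lam i z * f (z + lam i) / (z + lam i))"

definition phi_frechet :: "real \<Rightarrow> nat \<Rightarrow> nat \<Rightarrow> (nat \<Rightarrow> real) \<Rightarrow> nat \<Rightarrow> real" where
  "phi_frechet \<alpha> = phi_gen (frechet_cdf \<alpha>) (frechet_pdf \<alpha>) 0"

definition J_frechet :: "real \<Rightarrow> nat \<Rightarrow> nat \<Rightarrow> (nat \<Rightarrow> real) \<Rightarrow> nat \<Rightarrow> real" where
  "J_frechet \<alpha> = J_gen (frechet_cdf \<alpha>) (frechet_pdf \<alpha>) 0"

definition phi_pareto :: "real \<Rightarrow> nat \<Rightarrow> nat \<Rightarrow> (nat \<Rightarrow> real) \<Rightarrow> nat \<Rightarrow> real" where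
  "phi_pareto \<alpha> = phi_gen (pareto_cdf \<alpha>) (pareto_pdf \<alpha>) 1"

definition J_pareto :: "real \<Rightarrow> nat \<Rightarrow> nat \<Rightarrow> (nat \<Rightarrow> real) \<Rightarrow> nat \<Rightarrow> real" where
  "J_pareto \<alpha> = J_gen (pareto_cdf \<alpha>) (pareto_pdf \<alpha>) 1"

end

theory Submission
  imports Defs "HOL-Real_Asymp.Real_Asymp"
begin

(* Let G x be the probability that fewer than m of the other coordinates r_j - lam_j exceed
   x - lam_i, so that phi_i and J_i are the integrals of G f and G f / x over the support.
   Since 1 / x = (x powr -alpha) powr (1 / alpha), Jensen's inequality for this concave power
   bounds J_i / phi_i by C powr (1 / alpha) as soon as C bounds the G f-average of x powr -alpha.
   Such a C comes from writing G f = psi * w with psi nondecreasing and w a weight whose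
   x powr -alpha-average is exactly C: as x powr -alpha decreases and crosses C once, Chebyshev's
   argument applies. The weight w = f always works. When m <= sigma_i one may instead take
   w = f F^(sigma_i - 1) (x powr -alpha / F)^(m - 1), because each of the sigma_i - 1 coordinates
   with smaller lam_j contributes the monotone likelihood ratio F (x - delta) / F x, by
   log-concavity of F. The averages are explicit, C = m / (sigma_i + 1 - m) for Frechet and
   C = m / (sigma_i + 1) for Pareto, and both are below the constants of the statement. *)

section \<open>Fewer than k exceedances\<close>

(* The probability that fewer than k of the independent events with probabilities 1 - s j, j in A, occur. *)
definition fewer_exceed :: "'a set \<Rightarrow> ('a \<Rightarrow> real) \<Rightarrow> nat \<Rightarrow> real" where
  "fewer_exceed A s k =
     (\<Sum>S\<in>{S. S \<subseteq> A \<and> card S < k}. (\<Prod>j\<in>S. 1 - s j) * (\<Prod>j\<in>A - S. s j))"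

lemma fewer_exceed_0 [simp]: "fewer_exceed A s 0 = 0"
  by (simp add: fewer_exceed_def)

lemma fewer_exceed_empty:
  assumes "1 \<le> k"
  shows "fewer_exceed {} s k = 1"
proof -
  have subsets: "{S. S \<subseteq> {} \<and> card S < k} = {{}}" using assms by auto
  show ?thesis unfolding fewer_exceed_def subsets by simp
qed

lemma fewer_exceed_measurable [measurable]:
  assumes [measurable]: "\<And>j. (\<lambda>x. s j x) \<in> borel_measurable M"
  shows "(\<lambda>x. fewer_exceed A (\<lambda>j. s j x) k) \<in> borel_measurable M"
  unfolding fewer_exceed_def by measurable

lemma subsets_card_less_insert:
  assumes "finite A" "a \<notin> A" "1 \<le> k"
  shows "{S. S \<subseteq> insert a A \<and> card S < k}
           = {S. S \<subseteq> A \<and> card S < k} \<union> insert a ` {S. S \<subseteq> A \<and> card S < k - 1}"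
proof (intro set_eqI iffI)
  fix S assume S: "S \<in> {S. S \<subseteq> insert a A \<and> card S < k}"
  have "finite S" using S assms(1) finite_subset by auto
  then have "a \<in> S \<Longrightarrow> card (S - {a}) < k - 1"
    using S card_gt_0_iff[of S] by (auto simp: card_Diff_singleton)
  with S show "S \<in> {S. S \<subseteq> A \<and> card S < k} \<union> insert a ` {S. S \<subseteq> A \<and> card S < k - 1}"
    by (cases "a \<in> S") (auto simp: image_iff intro!: exI[of _ "S - {a}"])
next
  fix S assume "S \<in> {S. S \<subseteq> A \<and> card S < k} \<union> insert a ` {S. S \<subseteq> A \<and> card S < k - 1}"
  then show "S \<in> {S. S \<subseteq> insert a A \<and> card S < k}"
    using assms by (auto simp: card_insert_if finite_subset subset_iff)
qed

lemma fewer_exceed_insert: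
  assumes A: "finite A" "a \<notin> A" and k: "1 \<le> k"
  shows "fewer_exceed (insert a A) s k = s a * fewer_exceed A s k + (1 - s a) * fewer_exceed A s (k - 1)"
proof -
  let ?t = "\<lambda>B S. (\<Prod>j\<in>S. 1 - s j) * (\<Prod>j\<in>B - S. s j)"
  let ?X = "{S. S \<subseteq> A \<and> card S < k}" and ?Y = "{S. S \<subseteq> A \<and> card S < k - 1}"
  have without_a: "?t (insert a A) S = s a * ?t A S" if "S \<subseteq> A" for S
  proof -
    have "insert a A - S = insert a (A - S)" using that A by auto
    then show ?thesis using A by simp
  qed
  have with_a: "?t (insert a A) (insert a S) = (1 - s a) * ?t A S" if "S \<subseteq> A" for S
  proof -
    have "insert a A - insert a S = A - S" and "finite S" and "a \<notin> S"
      using that A finite_subset by auto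
    then show ?thesis by simp
  qed
  have "inj_on (insert a) ?Y" and "?X \<inter> insert a ` ?Y = {}"
    using A by (auto simp: inj_on_def)
  then have "fewer_exceed (insert a A) s k = sum (?t (insert a A)) ?X + sum (?t (insert a A) \<circ> insert a) ?Y"
    unfolding fewer_exceed_def subsets_card_less_insert[OF assms]
    using A by (simp add: sum.union_disjoint sum.reindex)
  also have "\<dots> = s a * fewer_exceed A s k + (1 - s a) * fewer_exceed A s (k - 1)"
    unfolding fewer_exceed_def sum_distrib_left using without_a with_a by (auto intro!: sum.cong)
  finally show ?thesis .
qed

lemma fewer_exceed_bounds:
  assumes "finite A" "\<And>j. j \<in> A \<Longrightarrow> 0 \<le> s j \<and> s j \<le> 1"
  shows "0 \<le> fewer_exceed A s k \<and> fewer_exceed A s k \<le> 1"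
  using assms
proof (induction A arbitrary: k rule: finite_induct)
  case empty
  then show ?case by (cases k) (auto simp: fewer_exceed_empty)
next
  case (insert a A)
  show ?case
  proof (cases k)
    case (Suc k')
    have "0 \<le> fewer_exceed A s k \<and> fewer_exceed A s k \<le> 1"
      and "0 \<le> fewer_exceed A s (k - 1) \<and> fewer_exceed A s (k - 1) \<le> 1"
      and "0 \<le> s a \<and> s a \<le> 1"
      using insert by auto
    then show ?thesis
      using insert Suc by (simp add: fewer_exceed_insert convex_bound_le)
  qed simp
qed

lemma fewer_exceed_mono:
  assumes "finite A" "\<And>j. j \<in> A \<Longrightarrow> 0 \<le> s j \<and> s j \<le> 1" "k \<le> k'"
  shows "fewer_exceed A s k \<le> fewer_exceed A s k'"
  unfolding fewer_exceed_def
proof (rule sum_mono2)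
  fix S assume "S \<in> {S. S \<subseteq> A \<and> card S < k'} - {S. S \<subseteq> A \<and> card S < k}"
  then show "0 \<le> (\<Prod>j\<in>S. 1 - s j) * (\<Prod>j\<in>A - S. s j)"
    using assms by (intro mult_nonneg_nonneg prod_nonneg) auto
qed (use assms in auto)

lemma topm_weight_eq_fewer_exceed:
  assumes "1 \<le> m"
  shows "topm_weight F d m lam i z = fewer_exceed ({..<d} - {i}) (\<lambda>j. F (z + lam j)) m"
proof -
  let ?A = "{..<d} - {i}"
  let ?t = "\<lambda>S. (\<Prod>j\<in>S. 1 - F (z + lam j)) * (\<Prod>j\<in>?A - S. F (z + lam j))"
  let ?B = "\<lambda>\<theta>. {S. S \<subseteq> ?A \<and> card S = \<theta> - 1}"
  have "topm_weight F d m lam i z = (\<Sum>\<theta>\<in>{1..m}. sum ?t (?B \<theta>))"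
    unfolding topm_weight_def by (intro sum.cong refl) (auto intro!: prod.cong)
  also have "\<dots> = sum ?t (\<Union>\<theta>\<in>{1..m}. ?B \<theta>)"
    by (rule sum.UNION_disjoint[symmetric]) auto
  also have "(\<Union>\<theta>\<in>{1..m}. ?B \<theta>) = {S. S \<subseteq> ?A \<and> card S < m}"
    using assms by (auto intro!: bexI[of _ "card _ + 1"])
  finally show ?thesis unfolding fewer_exceed_def .
qed

lemma card_ranked_below:
  assumes bij: "bij_betw \<pi> {..<d} {1..d}" and "i < d"
  shows "card {j \<in> {..<d} - {i}. \<pi> j < \<pi> i} = \<pi> i - 1"
proof -
  have "\<pi> ` {j \<in> {..<d} - {i}. \<pi> j < \<pi> i} = {1..<\<pi> i}"
  proof (intro equalityI subsetI)
    fix b assume "b \<in> {1..<\<pi> i}"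
    moreover have "\<pi> i \<le> d"
      using bij_betw_apply[OF bij] \<open>i < d\<close> by auto
    ultimately have "b \<in> \<pi> ` {..<d}"
      using bij by (simp add: bij_betw_def)
    then obtain j where "j \<in> {..<d}" "\<pi> j = b"
      by blast
    then show "b \<in> \<pi> ` {j \<in> {..<d} - {i}. \<pi> j < \<pi> i}"
      using \<open>b \<in> {1..<\<pi> i}\<close> by auto
  qed (use bij_betw_apply[OF bij] in auto)
  moreover have "inj_on \<pi> {j \<in> {..<d} - {i}. \<pi> j < \<pi> i}"
    using bij_betw_imp_inj_on[OF bij] by (rule inj_on_subset) auto
  ultimately show ?thesis
    by (metis card_atLeastLessThan card_image)
qed

section \<open>Monotone likelihood ratios\<close>

lemma mono_on_cong: "mono_on D f \<Longrightarrow> (\<And>x. x \<in> D \<Longrightarrow> f x = g x) \<Longrightarrow> mono_on D g"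
  unfolding mono_on_def by metis

lemma mono_on_add:
  fixes f g :: "'a::order \<Rightarrow> 'b::ordered_ab_semigroup_add"
  shows "mono_on D f \<Longrightarrow> mono_on D g \<Longrightarrow> mono_on D (\<lambda>x. f x + g x)"
  unfolding mono_on_def by (meson add_mono)

lemma mono_on_power:
  fixes f :: "'a::order \<Rightarrow> real"
  assumes "mono_on D f" "\<And>x. x \<in> D \<Longrightarrow> 0 \<le> f x"
  shows "mono_on D (\<lambda>x. f x ^ k)"
  using mono_on_prod[of "{..<k}" D "\<lambda>_. f"] assms by (simp add: Pi_iff)

lemma mono_on_convex_comb:
  fixes \<kappa> X Z :: "'a::order \<Rightarrow> real"
  assumes "mono_on D \<kappa>" "mono_on D X" "mono_on D Z"
    and "\<And>x. x \<in> D \<Longrightarrow> 0 \<le> \<kappa> x \<and> \<kappa> x \<le> 1 \<and> Z x \<le> X x"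
  shows "mono_on D (\<lambda>x. \<kappa> x * X x + (1 - \<kappa> x) * Z x)"
proof (rule mono_onI)
  fix x y assume xy: "x \<in> D" "y \<in> D" "x \<le> y"
  have mono: "\<kappa> x \<le> \<kappa> y" "X x \<le> X y" "Z x \<le> Z y" using assms(1-3) xy by (auto dest: mono_onD)
  have bounds: "Z x \<le> X x" "0 \<le> \<kappa> y" "\<kappa> y \<le> 1" using assms(4) xy by auto
  have "\<kappa> x * X x + (1 - \<kappa> x) * Z x = Z x + \<kappa> x * (X x - Z x)" by algebra
  also have "\<dots> \<le> Z x + \<kappa> y * (X x - Z x)" using bounds mono by (intro add_left_mono mult_right_mono) auto
  also have "\<dots> = \<kappa> y * X x + (1 - \<kappa> y) * Z x" by algebra
  also have "\<dots> \<le> \<kappa> y * X y + (1 - \<kappa> y) * Z y" using bounds mono by (intro add_mono mult_left_mono) auto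
  finally show "\<kappa> x * X x + (1 - \<kappa> x) * Z x \<le> \<kappa> y * X y + (1 - \<kappa> y) * Z y" .
qed

lemma mono_on_fewer_exceed:
  fixes s :: "'a \<Rightarrow> 'b::order \<Rightarrow> real"
  assumes "finite A" "\<And>j. j \<in> A \<Longrightarrow> mono_on D (s j)"
    and "\<And>j x. j \<in> A \<Longrightarrow> x \<in> D \<Longrightarrow> 0 \<le> s j x \<and> s j x \<le> 1"
  shows "mono_on D (\<lambda>x. fewer_exceed A (\<lambda>j. s j x) k)"
  using assms
proof (induction A arbitrary: k rule: finite_induct)
  case empty
  then show ?case by (cases k) (simp_all add: fewer_exceed_empty mono_on_const)
next
  case (insert a A)
  show ?case
  proof (cases "k = 0")
    case False
    have IH: "mono_on D (\<lambda>x. fewer_exceed A (\<lambda>j. s j x) k')" for k'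
      using insert by simp
    have "mono_on D (\<lambda>x. s a x * fewer_exceed A (\<lambda>j. s j x) k + (1 - s a x) * fewer_exceed A (\<lambda>j. s j x) (k - 1))"
      by (rule mono_on_convex_comb[OF _ IH IH]) (use insert in \<open>auto intro!: fewer_exceed_mono\<close>)
    then show ?thesis
      by (rule mono_on_cong) (use insert False in \<open>simp add: fewer_exceed_insert\<close>)
  qed (simp add: mono_on_const)
qed

(* With T = 1 - F, f * order_weight F T n k is, up to a constant factor, the density of the k-th largest
   of n + 1 independent samples with distribution function F and density f. *)
definition order_weight :: "('a \<Rightarrow> real) \<Rightarrow> ('a \<Rightarrow> real) \<Rightarrow> nat \<Rightarrow> nat \<Rightarrow> 'a \<Rightarrow> real" where
  "order_weight F T n k x = F x ^ n * (T x / F x) ^ (k - 1)"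

lemma order_weight_pos: "0 < F x \<Longrightarrow> 0 < T x \<Longrightarrow> 0 < order_weight F T n k x"
  by (simp add: order_weight_def)

lemma order_weight_Suc_left: "order_weight F T (Suc n) k x = F x * order_weight F T n k x"
  by (simp add: order_weight_def)

lemma fewer_exceed_pred_div_order_weight:
  assumes "1 \<le> k" "F x \<noteq> 0" "T x \<noteq> 0"
  shows "fewer_exceed A s (k - 1) / order_weight F T n k x
           = fewer_exceed A s (k - 1) / order_weight F T n (k - 1) x * (F x / T x)"
proof (cases "k = 1")
  case False
  define j where "j = k - 2"
  have "k = Suc (Suc j)" using assms(1) False unfolding j_def by simp
  then have "order_weight F T n k x = order_weight F T n (k - 1) x * (T x / F x)"
    by (simp add: order_weight_def)
  then show ?thesis using assms by simp
qed simp

lemma fewer_exceed_pred_div_order_weight_le: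
  assumes "finite A" "\<And>j. j \<in> A \<Longrightarrow> 0 \<le> s j \<and> s j \<le> 1" "1 \<le> k" "0 < F x" "0 < T x"
  shows "fewer_exceed A s (k - 1) / order_weight F T n (k - 1) x * (F x / T x)
           \<le> fewer_exceed A s k / order_weight F T n k x"
proof -
  have "0 < order_weight F T n k x" using assms by (simp add: order_weight_pos)
  then have "fewer_exceed A s (k - 1) / order_weight F T n k x \<le> fewer_exceed A s k / order_weight F T n k x"
    using assms by (intro divide_right_mono fewer_exceed_mono) auto
  then show ?thesis using assms fewer_exceed_pred_div_order_weight[of k F x T A s n] by simp
qed

lemma fewer_exceed_insert_div_order_weight:
  fixes s :: "'a \<Rightarrow> real" and F T :: "'b \<Rightarrow> real" and n k :: nat and x :: 'b
  assumes "finite A" "a \<notin> A" "1 \<le> k" "F x \<noteq> 0" "T x \<noteq> 0"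
  defines "\<psi> \<equiv> \<lambda>k. fewer_exceed A s k / order_weight F T n k x"
  shows "fewer_exceed (insert a A) s k / order_weight F T n k x
           = s a * \<psi> k + (1 - s a) * (\<psi> (k - 1) * (F x / T x))"
    and "fewer_exceed (insert a A) s k / order_weight F T (Suc n) k x
           = s a / F x * \<psi> k + (1 - s a / F x * F x) * (\<psi> (k - 1) / T x)"
proof -
  have rec: "fewer_exceed (insert a A) s k = s a * fewer_exceed A s k + (1 - s a) * fewer_exceed A s (k - 1)"
    using assms by (simp add: fewer_exceed_insert)
  have pred: "fewer_exceed A s (k - 1) / order_weight F T n k x = \<psi> (k - 1) * (F x / T x)"
    unfolding \<psi>_def using assms by (intro fewer_exceed_pred_div_order_weight) auto
  have "fewer_exceed (insert a A) s k / order_weight F T n k x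
          = s a * \<psi> k + (1 - s a) * (fewer_exceed A s (k - 1) / order_weight F T n k x)"
    unfolding rec \<psi>_def by (simp add: add_divide_distrib)
  then show "fewer_exceed (insert a A) s k / order_weight F T n k x
          = s a * \<psi> k + (1 - s a) * (\<psi> (k - 1) * (F x / T x))"
    by (simp only: pred)
  have "fewer_exceed (insert a A) s k / order_weight F T (Suc n) k x
          = s a / F x * \<psi> k + (1 - s a) / F x * (fewer_exceed A s (k - 1) / order_weight F T n k x)"
    unfolding rec \<psi>_def order_weight_Suc_left using assms by (simp add: add_divide_distrib)
  also have "\<dots> = s a / F x * \<psi> k + (1 - s a / F x * F x) * (\<psi> (k - 1) / T x)"
  proof -
    have "(1 - s a) / F x * (p * (F x / T x)) = (1 - s a / F x * F x) * (p / T x)" for p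
      using assms by (simp add: field_simps)
    then show ?thesis unfolding pred by simp
  qed
  finally show "fewer_exceed (insert a A) s k / order_weight F T (Suc n) k x
          = s a / F x * \<psi> k + (1 - s a / F x * F x) * (\<psi> (k - 1) / T x)" .
qed

lemma mono_on_mix_div:
  fixes \<kappa> \<psi> W F T :: "'a::order \<Rightarrow> real"
  assumes mono: "mono_on D \<kappa>" "mono_on D \<psi>" "mono_on D W"
    and mono_FT: "mono_on D (\<lambda>x. F x / T x)" "mono_on D (\<lambda>x. (1 - F x) / T x)"
    and bounds: "\<And>x. x \<in> D \<Longrightarrow> 0 \<le> \<kappa> x \<and> \<kappa> x \<le> 1 \<and> 0 \<le> W x \<and> W x * (F x / T x) \<le> \<psi> x"
    and FT: "\<And>x. x \<in> D \<Longrightarrow> 0 < F x \<and> F x \<le> 1 \<and> 0 < T x"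
  shows "mono_on D (\<lambda>x. \<kappa> x * \<psi> x + (1 - \<kappa> x * F x) * (W x / T x))"
proof -
  have "mono_on D (\<lambda>x. F x / T x + (1 - F x) / T x)"
    using mono_FT by (rule mono_on_add)
  then have inv_T: "mono_on D (\<lambda>x. 1 / T x)"
    by (rule mono_on_cong) (use FT in \<open>simp add: diff_divide_distrib\<close>)
  have nonneg: "0 \<le> W x \<and> 0 \<le> (1 - F x) / T x \<and> 0 \<le> 1 / T x" if "x \<in> D" for x
    using FT[OF that] bounds[OF that] by simp
  let ?X = "\<lambda>x. \<psi> x + W x * ((1 - F x) / T x)" and ?Z = "\<lambda>x. W x * (1 / T x)"
  have "mono_on D (\<lambda>x. \<kappa> x * ?X x + (1 - \<kappa> x) * ?Z x)"
  proof (rule mono_on_convex_comb[OF mono(1)])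
    show "mono_on D ?X"
      using mono nonneg by (intro mono_on_add mono_on_mul mono_FT) (auto simp: Pi_iff)
    show "mono_on D ?Z"
      using mono nonneg by (intro mono_on_mul inv_T) (auto simp: Pi_iff)
    fix x assume x: "x \<in> D"
    have "?Z x = W x * (F x / T x) + W x * ((1 - F x) / T x)"
      using FT[OF x] by (simp add: field_simps)
    then show "0 \<le> \<kappa> x \<and> \<kappa> x \<le> 1 \<and> ?Z x \<le> ?X x"
      using bounds[OF x] by linarith
  qed
  then show ?thesis
  proof (rule mono_on_cong)
    fix x assume "x \<in> D"
    then have "T x \<noteq> 0" using FT by force
    then show "\<kappa> x * ?X x + (1 - \<kappa> x) * ?Z x = \<kappa> x * \<psi> x + (1 - \<kappa> x * F x) * (W x / T x)"
      by (simp add: field_simps)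
  qed
qed

lemma fewer_exceed_div_order_weight_nonneg:
  assumes "finite A" "\<And>j. j \<in> A \<Longrightarrow> 0 \<le> s j \<and> s j \<le> 1" "0 < F x" "0 < T x"
  shows "0 \<le> fewer_exceed A s k / order_weight F T n k x"
  using assms fewer_exceed_bounds[of A s k] by (intro divide_nonneg_pos order_weight_pos) auto

lemma mono_on_fewer_exceed_div_order_weight_insert_notin:
  fixes F T :: "'b::order \<Rightarrow> real" and s :: "'a \<Rightarrow> 'b \<Rightarrow> real"
  assumes FT: "\<And>x. x \<in> D \<Longrightarrow> 0 < F x \<and> F x \<le> 1 \<and> 0 < T x"
    and mono_FT: "mono_on D (\<lambda>x. F x / T x)"
    and A: "finite A" "a \<notin> A" and k: "1 \<le> k"
    and s: "\<And>j x. j \<in> insert a A \<Longrightarrow> x \<in> D \<Longrightarrow> 0 \<le> s j x \<and> s j x \<le> 1" "mono_on D (s a)"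
    and IH: "\<And>k. mono_on D (\<lambda>x. fewer_exceed A (\<lambda>j. s j x) k / order_weight F T n k x)"
  shows "mono_on D (\<lambda>x. fewer_exceed (insert a A) (\<lambda>j. s j x) k / order_weight F T n k x)"
proof -
  let ?\<psi> = "\<lambda>k x. fewer_exceed A (\<lambda>j. s j x) k / order_weight F T n k x"
  have "mono_on D (\<lambda>x. s a x * ?\<psi> k x + (1 - s a x) * (?\<psi> (k - 1) x * (F x / T x)))"
  proof (rule mono_on_convex_comb[OF s(2) IH mono_on_mul[OF IH mono_FT]])
    fix x assume x: "x \<in> D"
    have "?\<psi> (k - 1) x * (F x / T x) \<le> ?\<psi> k x"
      using A k s(1)[OF _ x] FT[OF x] by (intro fewer_exceed_pred_div_order_weight_le) auto
    then show "0 \<le> s a x \<and> s a x \<le> 1 \<and> ?\<psi> (k - 1) x * (F x / T x) \<le> ?\<psi> k x"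
      using s(1)[OF _ x] by simp
  next
    show "?\<psi> (k - 1) \<in> D \<rightarrow> {0..}"
      using A s(1) FT by (auto intro!: fewer_exceed_div_order_weight_nonneg)
    show "(\<lambda>x. F x / T x) \<in> D \<rightarrow> {0..}"
      using FT by (force intro: divide_nonneg_pos)
  qed
  then show ?thesis
  proof (rule mono_on_cong)
    fix x assume x: "x \<in> D"
    show "s a x * ?\<psi> k x + (1 - s a x) * (?\<psi> (k - 1) x * (F x / T x))
        = fewer_exceed (insert a A) (\<lambda>j. s j x) k / order_weight F T n k x"
      by (rule fewer_exceed_insert_div_order_weight(1)[where s = "\<lambda>j. s j x", symmetric]) (use A k FT[OF x] in auto)
  qed
qed

lemma mono_on_fewer_exceed_div_order_weight_insert_in:
  fixes F T :: "'b::order \<Rightarrow> real" and s :: "'a \<Rightarrow> 'b \<Rightarrow> real"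
  assumes FT: "\<And>x. x \<in> D \<Longrightarrow> 0 < F x \<and> F x \<le> 1 \<and> 0 < T x"
    and mono_FT: "mono_on D (\<lambda>x. F x / T x)" "mono_on D (\<lambda>x. (1 - F x) / T x)"
    and A: "finite A" "a \<notin> A" and k: "1 \<le> k"
    and s: "\<And>j x. j \<in> insert a A \<Longrightarrow> x \<in> D \<Longrightarrow> 0 \<le> s j x \<and> s j x \<le> 1"
      "mono_on D (\<lambda>x. s a x / F x)" "\<And>x. x \<in> D \<Longrightarrow> s a x \<le> F x"
    and IH: "\<And>k. mono_on D (\<lambda>x. fewer_exceed A (\<lambda>j. s j x) k / order_weight F T n k x)"
  shows "mono_on D (\<lambda>x. fewer_exceed (insert a A) (\<lambda>j. s j x) k / order_weight F T (Suc n) k x)"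
proof -
  let ?\<psi> = "\<lambda>k x. fewer_exceed A (\<lambda>j. s j x) k / order_weight F T n k x"
  \<comment> \<open>the coordinate \<open>a\<close> enters through the ratio \<open>s a / F\<close>, absorbed by the extra factor \<open>F\<close>\<close>
  have "mono_on D (\<lambda>x. s a x / F x * ?\<psi> k x + (1 - s a x / F x * F x) * (?\<psi> (k - 1) x / T x))"
  proof (rule mono_on_mix_div[OF s(2) IH IH mono_FT])
    fix x assume x: "x \<in> D"
    have "0 \<le> ?\<psi> (k - 1) x"
      using A s(1)[OF _ x] FT[OF x] by (intro fewer_exceed_div_order_weight_nonneg) auto
    moreover have "?\<psi> (k - 1) x * (F x / T x) \<le> ?\<psi> k x"
      using A k s(1)[OF _ x] FT[OF x] by (intro fewer_exceed_pred_div_order_weight_le) auto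
    moreover have "0 \<le> s a x / F x \<and> s a x / F x \<le> 1"
      using s(1)[OF _ x] s(3)[OF x] FT[OF x] by simp
    ultimately show "0 \<le> s a x / F x \<and> s a x / F x \<le> 1 \<and> 0 \<le> ?\<psi> (k - 1) x
        \<and> ?\<psi> (k - 1) x * (F x / T x) \<le> ?\<psi> k x"
      by simp
  qed (use FT in auto)
  then show ?thesis
  proof (rule mono_on_cong)
    fix x assume x: "x \<in> D"
    show "s a x / F x * ?\<psi> k x + (1 - s a x / F x * F x) * (?\<psi> (k - 1) x / T x)
        = fewer_exceed (insert a A) (\<lambda>j. s j x) k / order_weight F T (Suc n) k x"
      by (rule fewer_exceed_insert_div_order_weight(2)[where s = "\<lambda>j. s j x", symmetric]) (use A k FT[OF x] in auto)
  qed
qed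

lemma mono_on_fewer_exceed_div_order_weight:
  fixes F T :: "'b::order \<Rightarrow> real" and s :: "'a \<Rightarrow> 'b \<Rightarrow> real"
  assumes FT: "\<And>x. x \<in> D \<Longrightarrow> 0 < F x \<and> F x \<le> 1 \<and> 0 < T x"
    and mono_FT: "mono_on D (\<lambda>x. F x / T x)" "mono_on D (\<lambda>x. (1 - F x) / T x)"
    and "finite A"
    and s_mono: "\<And>j. j \<in> A \<Longrightarrow> mono_on D (s j)"
    and s_bounds: "\<And>j x. j \<in> A \<Longrightarrow> x \<in> D \<Longrightarrow> 0 \<le> s j x \<and> s j x \<le> 1"
    and L_mono: "\<And>j. j \<in> A \<inter> L \<Longrightarrow> mono_on D (\<lambda>x. s j x / F x)"
    and L_le: "\<And>j x. j \<in> A \<inter> L \<Longrightarrow> x \<in> D \<Longrightarrow> s j x \<le> F x"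
  shows "mono_on D (\<lambda>x. fewer_exceed A (\<lambda>j. s j x) k / order_weight F T (card (A \<inter> L)) k x)"
  using \<open>finite A\<close> s_mono s_bounds L_mono L_le
proof (induction A arbitrary: k rule: finite_induct)
  case empty
  have "mono_on D (\<lambda>x. (F x / T x) ^ (k - 1))"
    using mono_FT(1) FT by (intro mono_on_power) (auto intro: less_imp_le)
  then show ?case
    by (cases k) (auto simp: mono_on_const fewer_exceed_empty order_weight_def power_divide
      elim!: mono_on_cong)
next
  case (insert a A)
  have IH: "mono_on D (\<lambda>x. fewer_exceed A (\<lambda>j. s j x) k' / order_weight F T (card (A \<inter> L)) k' x)" for k'
    using insert by simp
  show ?case
  proof (cases "k = 0")
    case False
    then have "1 \<le> k" by simp
    show ?thesis
    proof (cases "a \<in> L")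
      case True
      then have "card (insert a A \<inter> L) = Suc (card (A \<inter> L))"
        using insert.hyps by simp
      with mono_on_fewer_exceed_div_order_weight_insert_in[OF FT mono_FT insert.hyps \<open>1 \<le> k\<close> _ _ _ IH]
      show ?thesis using insert.prems True by simp
    next
      case False
      then have "card (insert a A \<inter> L) = card (A \<inter> L)"
        by simp
      with mono_on_fewer_exceed_div_order_weight_insert_notin[OF FT mono_FT(1) insert.hyps \<open>1 \<le> k\<close> _ _ IH]
      show ?thesis using insert.prems by simp
    qed
  qed (simp add: mono_on_const)
qed

lemma convex_on_inner_add_le_outer_add:
  fixes \<phi> :: "real \<Rightarrow> real"
  assumes "convex_on S \<phi>" "p \<in> S" "r \<in> S" "p \<le> q" "q \<le> r" "p + r = q + q'"
  shows "\<phi> q + \<phi> q' \<le> \<phi> p + \<phi> r"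
proof (cases "p = r")
  case False
  define t where "t = (q - p) / (r - p)"
  have t: "0 \<le> t" "t \<le> 1" "t * (r - p) = q - p"
    using assms False by (auto simp: t_def field_simps)
  then have q: "q = (1 - t) *\<^sub>R p + t *\<^sub>R r" and q': "q' = (1 - (1 - t)) *\<^sub>R p + (1 - t) *\<^sub>R r"
    using assms by (simp_all add: algebra_simps)
  have "\<phi> q \<le> (1 - t) * \<phi> p + t * \<phi> r"
    unfolding q using convex_onD[OF assms(1), of t] assms t by simp
  moreover have "\<phi> q' \<le> (1 - (1 - t)) * \<phi> p + (1 - t) * \<phi> r"
    unfolding q' using convex_onD[OF assms(1), of "1 - t"] assms t by simp
  ultimately show ?thesis by (simp add: algebra_simps)
qed (use assms in simp)

lemma mono_on_shift_ratio_of_convex: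
  fixes \<phi> F :: "real \<Rightarrow> real"
  assumes "convex_on {a<..} \<phi>" and F: "\<And>t. a < t \<Longrightarrow> F t = exp (- \<phi> t)" "\<And>t. t \<le> a \<Longrightarrow> F t = 0"
    and "0 \<le> \<delta>"
  shows "mono_on {a<..} (\<lambda>x. F (x - \<delta>) / F x)"
proof (rule mono_onI)
  fix x y assume xy: "x \<in> {a<..}" "y \<in> {a<..}" "x \<le> y"
  have "F (x - \<delta>) * F y \<le> F (y - \<delta>) * F x"
  proof (cases "x - \<delta> \<le> a")
    case True
    then show ?thesis using F xy by (cases "y - \<delta> \<le> a") auto
  next
    case False
    then have "\<phi> x + \<phi> (y - \<delta>) \<le> \<phi> (x - \<delta>) + \<phi> y"
      using xy \<open>0 \<le> \<delta>\<close> by (intro convex_on_inner_add_le_outer_add[OF assms(1)]) auto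
    then show ?thesis
      using False xy \<open>0 \<le> \<delta>\<close> by (simp add: F exp_add[symmetric])
  qed
  then show "F (x - \<delta>) / F x \<le> F (y - \<delta>) / F y"
    using xy by (simp add: F field_simps)
qed

lemma convex_on_powr_neg:
  assumes "0 \<le> \<alpha>"
  shows "convex_on {0<..} (\<lambda>t::real. t powr -\<alpha>)"
proof (rule convex_on_realI[where f' = "\<lambda>t. -\<alpha> * t powr (-\<alpha> - 1)"])
  show "((\<lambda>t. t powr -\<alpha>) has_real_derivative -\<alpha> * x powr (-\<alpha> - 1)) (at x)" if "x \<in> {0<..}" for x
    using has_real_derivative_powr[of x "-\<alpha>"] that by simp
  show "-\<alpha> * x powr (-\<alpha> - 1) \<le> -\<alpha> * y powr (-\<alpha> - 1)" if "x \<in> {0<..}" "x \<le> y" for x y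
    using powr_mono2'[of "-\<alpha> - 1" x y] that assms by (simp add: mult_left_mono)
qed simp

section \<open>Integral inequalities\<close>

lemma set_integral_nonneg:
  fixes h :: "real \<Rightarrow> real"
  assumes "\<And>x. x \<in> D \<Longrightarrow> 0 \<le> h x"
  shows "0 \<le> (LINT x:D|lborel. h x)"
  unfolding set_lebesgue_integral_def
  using assms by (intro Bochner_Integration.integral_nonneg) (auto simp: indicator_def)

lemma set_integral_mult_le_of_single_crossing:
  fixes h w T \<psi> :: "real \<Rightarrow> real"
  assumes h: "set_integrable lborel D h" "set_integrable lborel D (\<lambda>x. T x * h x)"
    and w: "set_integrable lborel D (\<lambda>x. (T x - C) * w x)" "(LINT x:D|lborel. (T x - C) * w x) = 0"
    and \<psi>: "mono_on D \<psi>" and c: "c \<in> D"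
    and hw: "\<And>x. x \<in> D \<Longrightarrow> h x = \<psi> x * w x \<and> 0 \<le> w x"
    and crossing: "\<And>x. x \<in> D \<Longrightarrow> (x \<le> c \<longrightarrow> C \<le> T x) \<and> (c \<le> x \<longrightarrow> T x \<le> C)"
  shows "(LINT x:D|lborel. T x * h x) \<le> C * (LINT x:D|lborel. h x)"
proof -
  have "(LINT x:D|lborel. T x * h x - C * h x) \<le> (LINT x:D|lborel. \<psi> c * ((T x - C) * w x))"
  proof (rule set_integral_mono)
    fix x assume x: "x \<in> D"
    have "(T x - C) * \<psi> x \<le> (T x - C) * \<psi> c"
    proof (cases "x \<le> c")
      case True
      then show ?thesis using \<psi> x c crossing[OF x] by (intro mult_left_mono) (auto dest: mono_onD)
    next
      case False
      then show ?thesis using \<psi> x c crossing[OF x] by (intro mult_left_mono_neg) (auto dest: mono_onD)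
    qed
    then have "(T x - C) * \<psi> x * w x \<le> (T x - C) * \<psi> c * w x"
      using hw[OF x] by (intro mult_right_mono) auto
    then show "T x * h x - C * h x \<le> \<psi> c * ((T x - C) * w x)"
      using hw[OF x] by (simp add: algebra_simps)
  qed (use h w in \<open>auto intro: set_integral_diff set_integrable_mult_right\<close>)
  then show ?thesis
    using h w by (simp add: set_integral_diff set_integral_mult_right)
qed

lemma set_integral_mult_powr_le:
  fixes h T :: "real \<Rightarrow> real" and p C :: real
  assumes p: "0 \<le> p" "p \<le> 1" and C: "0 < C"
    and h: "set_integrable lborel D h" "set_integrable lborel D (\<lambda>x. T x * h x)"
    and moment: "(LINT x:D|lborel. T x * h x) \<le> C * (LINT x:D|lborel. h x)"
    and pos: "\<And>x. x \<in> D \<Longrightarrow> 0 \<le> h x \<and> 0 < T x"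
  shows "(LINT x:D|lborel. h x * T x powr p) \<le> C powr p * (LINT x:D|lborel. h x)"
proof (cases "set_integrable lborel D (\<lambda>x. h x * T x powr p)")
  case False
  have "0 \<le> (LINT x:D|lborel. h x)"
    using pos by (intro set_integral_nonneg) auto
  then show ?thesis
    using False C by (simp add: set_integrable_def set_lebesgue_integral_def not_integrable_integral_eq)
next
  case True
  define R where "R x = C powr p * (p / C * (T x * h x) + (1 - p) * h x)" for x
  have "(LINT x:D|lborel. h x * T x powr p) \<le> (LINT x:D|lborel. R x)"
  proof (rule set_integral_mono[OF True])
    show "set_integrable lborel D R"
      unfolding R_def using h by (intro set_integrable_mult_right set_integral_add) auto
    fix x assume x: "x \<in> D"
    \<comment> \<open>Young's inequality: \<open>t powr p \<le> p * t + (1 - p)\<close> at \<open>t = T x / C\<close>\<close>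
    have "(T x / C) powr p * 1 powr (1 - p) \<le> p * (T x / C) + (1 - p) * 1"
      using p C pos[OF x] by (intro Youngs_inequality_0) auto
    then have "T x powr p \<le> C powr p * (p * (T x / C) + (1 - p))"
      using C pos[OF x] by (simp add: powr_divide field_simps)
    then have "h x * T x powr p \<le> h x * (C powr p * (p * (T x / C) + (1 - p)))"
      using pos[OF x] by (intro mult_left_mono) auto
    then show "h x * T x powr p \<le> R x"
      unfolding R_def by (simp add: algebra_simps)
  qed
  also have "\<dots> = C powr p * (p / C * (LINT x:D|lborel. T x * h x) + (1 - p) * (LINT x:D|lborel. h x))"
    unfolding R_def using h by (simp add: set_integral_add set_integrable_mult_right)
  also have "\<dots> \<le> C powr p * (p / C * (C * (LINT x:D|lborel. h x)) + (1 - p) * (LINT x:D|lborel. h x))"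
    using moment p C by (intro mult_left_mono add_right_mono) auto
  also have "\<dots> = C powr p * (LINT x:D|lborel. h x)"
    using C by (simp add: algebra_simps)
  finally show ?thesis .
qed

lemma set_integral_Ioo_FTC_nonneg:
  fixes g \<Phi> :: "real \<Rightarrow> real"
  assumes "a < b"
    and deriv: "\<And>x. a < x \<Longrightarrow> x < b \<Longrightarrow> (\<Phi> has_real_derivative g x) (at x)"
    and cont: "\<And>x. a < x \<Longrightarrow> x < b \<Longrightarrow> isCont g x"
    and nonneg: "\<And>x. a < x \<Longrightarrow> x < b \<Longrightarrow> 0 \<le> g x"
    and lim: "(\<Phi> \<longlongrightarrow> A) (at_right a)" "(\<Phi> \<longlongrightarrow> B) (at_left b)"
  shows "set_integrable lborel {a<..<b} g \<and> (LINT x:{a<..<b}|lborel. g x) = B - A"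
  using interval_integral_FTC_nonneg[of "ereal a" "ereal b" \<Phi> g A B] assms
  by (simp add: ereal_tendsto_simps1 interval_lebesgue_integral_le_eq)

lemma set_integral_Ioi_FTC_nonneg:
  fixes g \<Phi> :: "real \<Rightarrow> real"
  assumes deriv: "\<And>x. a < x \<Longrightarrow> (\<Phi> has_real_derivative g x) (at x)"
    and cont: "\<And>x. a < x \<Longrightarrow> isCont g x"
    and nonneg: "\<And>x. a < x \<Longrightarrow> 0 \<le> g x"
    and lim: "(\<Phi> \<longlongrightarrow> A) (at_right a)" "(\<Phi> \<longlongrightarrow> B) at_top"
  shows "set_integrable lborel {a<..} g \<and> (LINT x:{a<..}|lborel. g x) = B - A"
  using interval_integral_FTC_nonneg[of "ereal a" \<infinity> \<Phi> g A B] assms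
  by (simp add: ereal_tendsto_simps1 interval_integral_to_infinity_eq)

lemma set_integral_eq_0_of_sign_change:
  fixes g \<Phi> :: "real \<Rightarrow> real"
  assumes "a < c"
    and deriv: "\<And>x. a < x \<Longrightarrow> (\<Phi> has_real_derivative g x) (at x)"
    and cont: "\<And>x. a < x \<Longrightarrow> isCont g x"
    and sign: "\<And>x. a < x \<Longrightarrow> x \<le> c \<Longrightarrow> 0 \<le> g x" "\<And>x. c \<le> x \<Longrightarrow> g x \<le> 0"
    and lim: "(\<Phi> \<longlongrightarrow> 0) (at_right a)" "(\<Phi> \<longlongrightarrow> 0) at_top"
  shows "set_integrable lborel {a<..} g \<and> (LINT x:{a<..}|lborel. g x) = 0"
proof -
  have "isCont \<Phi> c"
    using deriv \<open>a < c\<close> by (auto intro: DERIV_isCont)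
  then have lim_c: "(\<Phi> \<longlongrightarrow> \<Phi> c) (at_left c)" "(\<Phi> \<longlongrightarrow> \<Phi> c) (at_right c)"
    by (auto simp: isCont_def filterlim_at_split)
  have left: "set_integrable lborel {a<..<c} g \<and> (LINT x:{a<..<c}|lborel. g x) = \<Phi> c - 0"
    using assms lim_c by (intro set_integral_Ioo_FTC_nonneg[where \<Phi> = \<Phi>]) auto
  have "set_integrable lborel {c<..} (\<lambda>x. - g x) \<and> (LINT x:{c<..}|lborel. - g x) = 0 - (- \<Phi> c)"
    using assms lim_c tendsto_minus[OF lim(2)]
    by (intro set_integral_Ioi_FTC_nonneg[where \<Phi> = "\<lambda>x. - \<Phi> x"]) (auto intro!: DERIV_minus tendsto_minus)
  then have right: "set_integrable lborel {c<..} g \<and> (LINT x:{c<..}|lborel. g x) = - \<Phi> c"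
    using set_integrable_mult_right[of "-1" lborel "{c<..}" "\<lambda>x. - g x"] by (auto simp: set_integral_uminus)
  have "set_integrable lborel ({a<..<c} \<union> {c<..}) g \<and> (LINT x:{a<..<c} \<union> {c<..}|lborel. g x) = 0"
  proof -
    have "{a<..<c} \<inter> {c<..} = {}" by auto
    then show ?thesis using left right by (simp add: set_integrable_Un set_integral_Un)
  qed
  moreover have "({a<..} - ({a<..<c} \<union> {c<..})) \<union> (({a<..<c} \<union> {c<..}) - {a<..}) \<subseteq> {c}"
    using \<open>a < c\<close> by auto
  ultimately show ?thesis
    using set_integrable_discrete_difference[of "{c}" "{a<..}" "{a<..<c} \<union> {c<..}" lborel g]
      set_integral_discrete_difference[of "{c}" "{a<..}" "{a<..<c} \<union> {c<..}" lborel g]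
    by auto
qed

lemma powr_neg_crossing:
  fixes \<alpha> C x :: real
  assumes "0 < \<alpha>" "0 < C" "0 < x"
  shows "(x \<le> C powr (-1 / \<alpha>) \<longrightarrow> C \<le> x powr -\<alpha>) \<and> (C powr (-1 / \<alpha>) \<le> x \<longrightarrow> x powr -\<alpha> \<le> C)"
proof (intro conjI impI)
  have c: "(C powr (-1 / \<alpha>)) powr -\<alpha> = C" "0 < C powr (-1 / \<alpha>)"
    using assms by (simp_all add: powr_powr)
  show "C \<le> x powr -\<alpha>" if "x \<le> C powr (-1 / \<alpha>)"
    using powr_mono2'[of "-\<alpha>" x "C powr (-1 / \<alpha>)"] that assms c by simp
  show "x powr -\<alpha> \<le> C" if "C powr (-1 / \<alpha>) \<le> x"
    using powr_mono2'[of "-\<alpha>" "C powr (-1 / \<alpha>)" x] that assms c by simp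
qed

lemma set_integral_powr_substitution_eq_0:
  fixes \<phi> \<rho> :: "real \<Rightarrow> real"
  assumes "0 < \<alpha>" "0 \<le> a" "0 < C" "a < C powr (-1 / \<alpha>)"
    and deriv: "\<And>x. a < x \<Longrightarrow> (\<phi> has_real_derivative (C - x powr -\<alpha>) * \<rho> (x powr -\<alpha>)) (at (x powr -\<alpha>))"
    and cont: "\<And>x. a < x \<Longrightarrow> isCont \<rho> (x powr -\<alpha>)"
    and nonneg: "\<And>x. a < x \<Longrightarrow> 0 \<le> \<rho> (x powr -\<alpha>)"
    and lim: "((\<lambda>x. \<phi> (x powr -\<alpha>)) \<longlongrightarrow> 0) (at_right a)" "((\<lambda>x. \<phi> (x powr -\<alpha>)) \<longlongrightarrow> 0) at_top"
  shows "set_integrable lborel {a<..} (\<lambda>x. (x powr -\<alpha> - C) * (\<alpha> * x powr (-(\<alpha> + 1)) * \<rho> (x powr -\<alpha>)))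
    \<and> (LINT x:{a<..}|lborel. (x powr -\<alpha> - C) * (\<alpha> * x powr (-(\<alpha> + 1)) * \<rho> (x powr -\<alpha>))) = 0"
proof (rule set_integral_eq_0_of_sign_change[OF assms(4)])
  fix x assume x: "a < x"
  then have "0 < x" using assms(2) by simp
  have "((\<lambda>x. x powr -\<alpha>) has_real_derivative - \<alpha> * x powr (-(\<alpha> + 1))) (at x)"
    using has_real_derivative_powr[OF \<open>0 < x\<close>, of "-\<alpha>"] by simp
  from DERIV_chain2[OF deriv[OF x] this]
  show "((\<lambda>x. \<phi> (x powr -\<alpha>)) has_real_derivative
          (x powr -\<alpha> - C) * (\<alpha> * x powr (-(\<alpha> + 1)) * \<rho> (x powr -\<alpha>))) (at x)"
    by (simp add: algebra_simps)
  show "isCont (\<lambda>x. (x powr -\<alpha> - C) * (\<alpha> * x powr (-(\<alpha> + 1)) * \<rho> (x powr -\<alpha>))) x"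
    using \<open>0 < x\<close> cont[OF x]
    by (intro continuous_intros continuous_at_compose[of _ "\<lambda>x. x powr -\<alpha>", unfolded o_def]) auto
next
  fix x assume "a < x" "x \<le> C powr (-1 / \<alpha>)"
  then show "0 \<le> (x powr -\<alpha> - C) * (\<alpha> * x powr (-(\<alpha> + 1)) * \<rho> (x powr -\<alpha>))"
    using assms powr_neg_crossing[of \<alpha> C x] by simp
next
  fix x assume "C powr (-1 / \<alpha>) \<le> x"
  moreover have "a < x" using calculation assms(4) by simp
  ultimately show "(x powr -\<alpha> - C) * (\<alpha> * x powr (-(\<alpha> + 1)) * \<rho> (x powr -\<alpha>)) \<le> 0"
    using assms powr_neg_crossing[of \<alpha> C x] by (simp add: mult_nonpos_nonneg)
qed (use lim in auto)

lemma set_integral_eq_0_cong: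
  fixes f g :: "real \<Rightarrow> real"
  assumes "set_integrable lborel A g \<and> (LINT x:A|lborel. g x) = 0" "A \<in> sets lborel"
    and "\<And>x. x \<in> A \<Longrightarrow> f x = g x"
  shows "set_integrable lborel A f \<and> (LINT x:A|lborel. f x) = 0"
  using assms set_integrable_cong[of lborel lborel A A f g] set_lebesgue_integral_cong[of A lborel f g]
  by auto

lemma set_integral_Ici_shift:
  fixes k :: "real \<Rightarrow> real"
  shows "(LINT z:{c - l..}|lborel. k (z + l)) = (LINT x:{c..}|lborel. k x)"
proof -
  have "(LINT x:{c..}|lborel. k x) = \<bar>1\<bar> *\<^sub>R (\<integral>x. indicator {c..} (l + 1 * x) *\<^sub>R k (l + 1 * x) \<partial>lborel)"
    unfolding set_lebesgue_integral_def by (rule lborel_integral_real_affine) simp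
  also have "(\<lambda>x. indicator {c..} (l + 1 * x) *\<^sub>R k (l + 1 * x)) = (\<lambda>z. indicator {c - l..} z *\<^sub>R k (z + l))"
    by (auto simp: fun_eq_iff indicator_def algebra_simps)
  finally show ?thesis by (simp add: set_lebesgue_integral_def)
qed

lemma set_integral_Ici_eq_Ioi:
  fixes k :: "real \<Rightarrow> real"
  shows "(LINT x:{c..}|lborel. k x) = (LINT x:{c<..}|lborel. k x)"
  by (rule set_integral_discrete_difference[where X = "{c}"]) auto

lemma phi_gen_eq_set_integral:
  assumes "1 \<le> m"
  shows "phi_gen F f \<nu> d m lam i
           = (LINT x:{\<nu><..}|lborel. fewer_exceed ({..<d} - {i}) (\<lambda>j. F (x - lam i + lam j)) m * f x)"
    (is "_ = (LINT x:_|_. ?h x)")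
proof -
  have "phi_gen F f \<nu> d m lam i = (LINT z:{\<nu> - lam i..}|lborel. ?h (z + lam i))"
    unfolding phi_gen_def topm_weight_eq_fewer_exceed[OF assms] by simp
  also have "\<dots> = (LINT x:{\<nu><..}|lborel. ?h x)"
    by (rule trans[OF set_integral_Ici_shift[where k = ?h] set_integral_Ici_eq_Ioi])
  finally show ?thesis .
qed

lemma J_gen_eq_set_integral:
  assumes "1 \<le> m"
  shows "J_gen F f \<nu> d m lam i
           = (LINT x:{\<nu><..}|lborel. fewer_exceed ({..<d} - {i}) (\<lambda>j. F (x - lam i + lam j)) m * f x / x)"
    (is "_ = (LINT x:_|_. ?h x)")
proof -
  have "J_gen F f \<nu> d m lam i = (LINT z:{\<nu> - lam i..}|lborel. ?h (z + lam i))"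
    unfolding J_gen_def topm_weight_eq_fewer_exceed[OF assms] by simp
  also have "\<dots> = (LINT x:{\<nu><..}|lborel. ?h x)"
    by (rule trans[OF set_integral_Ici_shift[where k = ?h] set_integral_Ici_eq_Ioi])
  finally show ?thesis .
qed

section \<open>Power-tail models\<close>

locale power_tail_model =
  fixes \<alpha> a :: real and F f :: "real \<Rightarrow> real" and C :: "nat \<Rightarrow> nat \<Rightarrow> real"
  assumes alpha_gt_1: "1 < \<alpha>"
    and left_endpoint_nonneg: "0 \<le> a"
    and cdf_measurable [measurable]: "F \<in> borel_measurable borel"
    and pdf_measurable [measurable]: "f \<in> borel_measurable borel"
    and cdf_bounds: "\<And>x. 0 \<le> F x \<and> F x \<le> 1"
    and cdf_pos: "\<And>x. a < x \<Longrightarrow> 0 < F x"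
    and cdf_mono: "mono F"
    and mono_on_cdf_shift_ratio: "\<And>\<delta>. 0 \<le> \<delta> \<Longrightarrow> mono_on {a<..} (\<lambda>x. F (x - \<delta>) / F x)"
    and mono_on_cdf_div_powr: "mono_on {a<..} (\<lambda>x. F x / x powr -\<alpha>)"
    and mono_on_ccdf_div_powr: "mono_on {a<..} (\<lambda>x. (1 - F x) / x powr -\<alpha>)"
    and pdf_nonneg: "\<And>x. a < x \<Longrightarrow> 0 \<le> f x"
    and pdf_integrable: "set_integrable lborel {a<..} f"
    and moment_pos: "\<And>n m. 1 \<le> m \<Longrightarrow> m \<le> n + 1 \<Longrightarrow> 0 < C n m"
    and moment_crossing: "\<And>n m. 1 \<le> m \<Longrightarrow> m \<le> n + 1 \<Longrightarrow> a < C n m powr (-1 / \<alpha>)"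
    and moment_eq: "\<And>n m. 1 \<le> m \<Longrightarrow> m \<le> n + 1 \<Longrightarrow>
      set_integrable lborel {a<..} (\<lambda>x. (x powr -\<alpha> - C n m) * (f x * order_weight F (\<lambda>x. x powr -\<alpha>) n m x))
      \<and> (LINT x:{a<..}|lborel. (x powr -\<alpha> - C n m) * (f x * order_weight F (\<lambda>x. x powr -\<alpha>) n m x)) = 0"
begin

lemma powr_mult_pdf_integrable: "set_integrable lborel {a<..} (\<lambda>x. x powr -\<alpha> * f x)"
proof -
  have "set_integrable lborel {a<..} (\<lambda>x. (x powr -\<alpha> - C 0 1) * f x + C 0 1 * f x)"
    using moment_eq[of 1 0] pdf_integrable by (intro set_integral_add) (auto simp: order_weight_def)
  then show ?thesis by (simp add: algebra_simps)
qed

lemma set_integral_div_le: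
  assumes G: "\<And>x. a < x \<Longrightarrow> 0 \<le> G x \<and> G x \<le> 1" and [measurable]: "G \<in> borel_measurable borel"
    and m: "1 \<le> m" "m \<le> n + 1"
    and ratio_mono: "mono_on {a<..} (\<lambda>x. G x / order_weight F (\<lambda>x. x powr -\<alpha>) n m x)"
  shows "(LINT x:{a<..}|lborel. G x * f x / x) \<le> C n m powr (1 / \<alpha>) * (LINT x:{a<..}|lborel. G x * f x)"
proof -
  let ?w = "order_weight F (\<lambda>x. x powr -\<alpha>) n m"
  have bound: "\<bar>G x * f x\<bar> \<le> \<bar>f x\<bar>" if "a < x" for x
    using G[OF that] pdf_nonneg[OF that] by (simp add: abs_mult mult_left_le_one_le)
  have h: "set_integrable lborel {a<..} (\<lambda>x. G x * f x)"
    using bound by (intro set_integrable_bound[OF pdf_integrable]) (auto simp: set_borel_measurable_def)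
  have Th: "set_integrable lborel {a<..} (\<lambda>x. x powr -\<alpha> * (G x * f x))"
    using bound by (intro set_integrable_bound[OF powr_mult_pdf_integrable])
      (auto simp: set_borel_measurable_def abs_mult intro!: mult_left_mono)
  have "(LINT x:{a<..}|lborel. x powr -\<alpha> * (G x * f x)) \<le> C n m * (LINT x:{a<..}|lborel. G x * f x)"
  proof (rule set_integral_mult_le_of_single_crossing[OF h Th _ _ ratio_mono])
    show "C n m powr (-1 / \<alpha>) \<in> {a<..}"
      using moment_crossing[OF m] by simp
    fix x :: real assume x: "x \<in> {a<..}"
    then have "0 < ?w x"
      using cdf_pos left_endpoint_nonneg by (intro order_weight_pos) auto
    then show "G x * f x = G x / ?w x * (f x * ?w x) \<and> 0 \<le> f x * ?w x"
      using x pdf_nonneg by simp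
  qed (use moment_eq[OF m] powr_neg_crossing[of \<alpha> "C n m"] moment_pos[OF m] alpha_gt_1
      left_endpoint_nonneg in auto)
  then have "(LINT x:{a<..}|lborel. G x * f x * (x powr -\<alpha>) powr (1 / \<alpha>))
      \<le> C n m powr (1 / \<alpha>) * (LINT x:{a<..}|lborel. G x * f x)"
    using moment_pos[OF m] alpha_gt_1 h Th G pdf_nonneg left_endpoint_nonneg
    by (intro set_integral_mult_powr_le) auto
  moreover have "(LINT x:{a<..}|lborel. G x * f x * (x powr -\<alpha>) powr (1 / \<alpha>))
      = (LINT x:{a<..}|lborel. G x * f x / x)"
  proof (intro set_lebesgue_integral_cong allI impI)
    fix x :: real assume "x \<in> {a<..}"
    have "(x powr -\<alpha>) powr (1 / \<alpha>) = x powr -1"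
      using alpha_gt_1 by (simp add: powr_powr)
    also have "\<dots> = 1 / x"
      using \<open>x \<in> {a<..}\<close> left_endpoint_nonneg by (simp add: powr_minus_divide)
    finally show "G x * f x * (x powr -\<alpha>) powr (1 / \<alpha>) = G x * f x / x" by simp
  qed simp
  ultimately show ?thesis by simp
qed

lemma J_gen_div_phi_gen_le:
  assumes m: "1 \<le> m" and k: "1 \<le> k" "k \<le> n + 1"
    and ratio_mono: "mono_on {a<..} (\<lambda>x. fewer_exceed ({..<d} - {i}) (\<lambda>j. F (x - lam i + lam j)) m
                                       / order_weight F (\<lambda>x. x powr -\<alpha>) n k x)"
  shows "J_gen F f a d m lam i / phi_gen F f a d m lam i \<le> C n k powr (1 / \<alpha>)"
proof -
  let ?G = "\<lambda>x. fewer_exceed ({..<d} - {i}) (\<lambda>j. F (x - lam i + lam j)) m"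
  have G: "0 \<le> ?G x \<and> ?G x \<le> 1" for x
    using cdf_bounds by (intro fewer_exceed_bounds) auto
  have "J_gen F f a d m lam i \<le> C n k powr (1 / \<alpha>) * phi_gen F f a d m lam i"
    unfolding J_gen_eq_set_integral[OF m] phi_gen_eq_set_integral[OF m]
    by (rule set_integral_div_le[OF _ _ k ratio_mono]) (use G in auto)
  moreover have "0 \<le> phi_gen F f a d m lam i"
    unfolding phi_gen_eq_set_integral[OF m] using G pdf_nonneg by (intro set_integral_nonneg) auto
  ultimately show ?thesis
    by (cases "phi_gen F f a d m lam i = 0") (auto simp: divide_le_eq)
qed

lemma mono_on_cdf_shift: "mono_on {a<..} (\<lambda>x. F (x + c))"
  using cdf_mono by (intro mono_onI) (simp add: monoD)

lemma J_gen_div_phi_gen_le_base: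
  assumes "1 \<le> m"
  shows "J_gen F f a d m lam i / phi_gen F f a d m lam i \<le> C 0 1 powr (1 / \<alpha>)"
proof (rule J_gen_div_phi_gen_le[OF assms order.refl])
  have "mono_on {a<..} (\<lambda>x. fewer_exceed ({..<d} - {i}) (\<lambda>j. F (x - lam i + lam j)) m)"
    using cdf_bounds mono_on_cdf_shift[of "lam _ - lam i"]
    by (intro mono_on_fewer_exceed) (auto simp: algebra_simps)
  then show "mono_on {a<..} (\<lambda>x. fewer_exceed ({..<d} - {i}) (\<lambda>j. F (x - lam i + lam j)) m
                                    / order_weight F (\<lambda>x. x powr -\<alpha>) 0 1 x)"
    by (simp add: order_weight_def)
qed simp

lemma J_gen_div_phi_gen_le_lower_set:
  assumes m: "1 \<le> m" "m \<le> card L + 1"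
    and L: "L \<subseteq> {..<d} - {i}" "\<And>j. j \<in> L \<Longrightarrow> lam j \<le> lam i"
  shows "J_gen F f a d m lam i / phi_gen F f a d m lam i \<le> C (card L) m powr (1 / \<alpha>)"
proof (rule J_gen_div_phi_gen_le[OF m(1) m])
  have "card (({..<d} - {i}) \<inter> L) = card L"
    using L(1) by (simp add: Int_absorb1)
  moreover have "mono_on {a<..} (\<lambda>x. fewer_exceed ({..<d} - {i}) (\<lambda>j. F (x - lam i + lam j)) m
                       / order_weight F (\<lambda>x. x powr -\<alpha>) (card (({..<d} - {i}) \<inter> L)) m x)"
  proof (rule mono_on_fewer_exceed_div_order_weight)
    fix j assume "j \<in> ({..<d} - {i}) \<inter> L"
    then have "0 \<le> lam i - lam j"
      using L(2) by simp
    then show "mono_on {a<..} (\<lambda>x. F (x - lam i + lam j) / F x)"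
      using mono_on_cdf_shift_ratio[of "lam i - lam j"] by (simp add: algebra_simps)
    show "F (x - lam i + lam j) \<le> F x" for x
      using \<open>0 \<le> lam i - lam j\<close> by (intro monoD[OF cdf_mono]) simp
  next
    show "mono_on {a<..} (\<lambda>x. F (x - lam i + lam j))" for j
      using mono_on_cdf_shift[of "lam j - lam i"] by (simp add: algebra_simps)
  qed (use cdf_pos cdf_bounds left_endpoint_nonneg mono_on_cdf_div_powr mono_on_ccdf_div_powr in auto)
  ultimately show "mono_on {a<..} (\<lambda>x. fewer_exceed ({..<d} - {i}) (\<lambda>j. F (x - lam i + lam j)) m
                                    / order_weight F (\<lambda>x. x powr -\<alpha>) (card L) m x)"
    by simp
qed

lemma J_gen_div_phi_gen_le_rank:
  assumes "1 \<le> m" "i < d" and bij: "bij_betw \<pi> {..<d} {1..d}"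
    and ranks: "\<forall>j<d. \<forall>k<d. lam j < lam k \<longrightarrow> \<pi> j < \<pi> k"
  shows "J_gen F f a d m lam i / phi_gen F f a d m lam i
           \<le> (if m \<le> \<pi> i then C (\<pi> i - 1) m else C 0 1) powr (1 / \<alpha>)"
proof (cases "m \<le> \<pi> i")
  case True
  let ?L = "{j \<in> {..<d} - {i}. \<pi> j < \<pi> i}"
  have "lam j \<le> lam i" if "j \<in> ?L" for j
  proof (rule ccontr)
    assume "\<not> lam j \<le> lam i"
    then have "\<pi> i < \<pi> j"
      using ranks that \<open>i < d\<close> by auto
    then show False
      using that by simp
  qed
  then show ?thesis
    using J_gen_div_phi_gen_le_lower_set[of m ?L] card_ranked_below[OF bij \<open>i < d\<close>] True assms(1) by auto
qed (use J_gen_div_phi_gen_le_base assms(1) in simp)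

end

section \<open>The Frechet distribution\<close>

lemma frechet_cdf_pos_eq: "0 < x \<Longrightarrow> frechet_cdf \<alpha> x = exp (- (x powr -\<alpha>))"
  by (simp add: frechet_cdf_def)

lemma frechet_cdf_mono:
  assumes "0 \<le> \<alpha>"
  shows "mono (frechet_cdf \<alpha>)"
proof (rule monoI)
  fix x y :: real assume "x \<le> y"
  then show "frechet_cdf \<alpha> x \<le> frechet_cdf \<alpha> y"
    using assms powr_mono2'[of "-\<alpha>" x y] by (auto simp: frechet_cdf_def)
qed

lemma frechet_cdf_shift_ratio_mono:
  assumes "0 \<le> \<alpha>" "0 \<le> \<delta>"
  shows "mono_on {0<..} (\<lambda>x. frechet_cdf \<alpha> (x - \<delta>) / frechet_cdf \<alpha> x)"
  using assms by (intro mono_on_shift_ratio_of_convex[OF convex_on_powr_neg]) (auto simp: frechet_cdf_def)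

lemma frechet_cdf_div_powr_mono:
  assumes "0 \<le> \<alpha>"
  shows "mono_on {0<..} (\<lambda>x. frechet_cdf \<alpha> x / x powr -\<alpha>)"
proof -
  have "mono_on {0<..} (\<lambda>x. frechet_cdf \<alpha> x * x powr \<alpha>)"
  proof (rule mono_on_mul)
    show "mono_on {0<..} (frechet_cdf \<alpha>)"
      using frechet_cdf_mono[OF assms] by (rule mono_imp_mono_on)
    show "mono_on {0<..} (\<lambda>x. x powr \<alpha>)"
      using assms by (auto intro!: mono_onI powr_mono2)
  qed (auto simp: frechet_cdf_def)
  then show ?thesis
    by (rule mono_on_cong) (simp add: powr_minus divide_inverse)
qed

lemma one_minus_exp_neg_div_antimono:
  fixes u v :: real
  assumes "0 < u" "u \<le> v"
  shows "(1 - exp (- v)) / v \<le> (1 - exp (- u)) / u"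
proof -
  define t where "t = u / v"
  have t: "0 \<le> t" "t \<le> 1" "(1 - t) *\<^sub>R 0 + t *\<^sub>R (- v) = - u"
    using assms by (auto simp: t_def)
  have "exp (- u) \<le> (1 - t) * exp 0 + t * exp (- v)"
    using convex_onD[OF exp_convex, of t 0 "-v"] t by simp
  then have "t * (1 - exp (- v)) \<le> 1 - exp (- u)"
    by (simp add: algebra_simps)
  then show ?thesis
    using assms by (simp add: t_def field_simps)
qed

lemma frechet_ccdf_div_powr_mono:
  assumes "0 \<le> \<alpha>"
  shows "mono_on {0<..} (\<lambda>x. (1 - frechet_cdf \<alpha> x) / x powr -\<alpha>)"
proof (rule mono_onI)
  fix x y :: real assume xy: "x \<in> {0<..}" "y \<in> {0<..}" "x \<le> y"
  then have "(1 - exp (- (x powr -\<alpha>))) / x powr -\<alpha> \<le> (1 - exp (- (y powr -\<alpha>))) / y powr -\<alpha>"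
    using assms by (intro one_minus_exp_neg_div_antimono powr_mono2') auto
  then show "(1 - frechet_cdf \<alpha> x) / x powr -\<alpha> \<le> (1 - frechet_cdf \<alpha> y) / y powr -\<alpha>"
    using xy by (simp add: frechet_cdf_pos_eq)
qed

lemma frechet_pdf_integrable:
  assumes "0 < \<alpha>"
  shows "set_integrable lborel {0<..} (frechet_pdf \<alpha>)"
proof -
  have "set_integrable lborel {0<..} (\<lambda>x. \<alpha> * x powr (-(\<alpha> + 1)) * exp (- (x powr -\<alpha>)))
      \<and> (LINT x:{0<..}|lborel. \<alpha> * x powr (-(\<alpha> + 1)) * exp (- (x powr -\<alpha>))) = 1 - 0"
  proof (rule set_integral_Ioi_FTC_nonneg[where \<Phi> = "\<lambda>x. exp (- (x powr -\<alpha>))"])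
    fix x :: real assume "0 < x"
    show "((\<lambda>x. exp (- (x powr -\<alpha>))) has_real_derivative \<alpha> * x powr (-(\<alpha> + 1)) * exp (- (x powr -\<alpha>))) (at x)"
    proof -
      have "((\<lambda>x. x powr -\<alpha>) has_real_derivative -\<alpha> * x powr (-(\<alpha> + 1))) (at x)"
        using has_real_derivative_powr[OF \<open>0 < x\<close>, of "-\<alpha>"] by simp
      from DERIV_chain2[OF DERIV_exp DERIV_minus[OF this]] show ?thesis
        by (simp add: algebra_simps)
    qed
    show "isCont (\<lambda>x. \<alpha> * x powr (-(\<alpha> + 1)) * exp (- (x powr -\<alpha>))) x"
      using \<open>0 < x\<close> by (intro continuous_intros) auto
  qed (use assms in \<open>simp_all, real_asymp+\<close>)
  then show ?thesis
    by (subst set_integrable_cong[OF refl refl]) (auto simp: frechet_pdf_def)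
qed

lemma frechet_pdf_mult_order_weight:
  assumes "0 < x" "1 \<le> m" "m \<le> n + 1"
  shows "frechet_pdf \<alpha> x * order_weight (frechet_cdf \<alpha>) (\<lambda>x. x powr -\<alpha>) n m x
           = \<alpha> * x powr (-(\<alpha> + 1)) * ((x powr -\<alpha>) ^ (m - 1) * exp (- (real (n + 2 - m) * x powr -\<alpha>)))"
proof -
  define u E where "u = x powr -\<alpha>" and "E = exp (- u)"
  have "E * E ^ n = E ^ (n + 2 - m) * E ^ (m - 1)"
    using assms by (simp flip: power_add power_Suc)
  then have "E * (E ^ n * (u / E) ^ (m - 1)) = u ^ (m - 1) * E ^ (n + 2 - m)"
    unfolding E_def by (simp add: power_divide field_simps)
  moreover have "E ^ (n + 2 - m) = exp (- (real (n + 2 - m) * u))"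
    unfolding E_def by (simp flip: exp_of_nat_mult)
  ultimately show ?thesis
    using assms by (simp add: frechet_pdf_def frechet_cdf_def order_weight_def u_def E_def)
qed

lemma frechet_moment_eq:
  assumes "0 < \<alpha>" "1 \<le> m" "m \<le> n + 1"
  defines "C \<equiv> real m / real (n + 2 - m)"
  shows "set_integrable lborel {0<..}
           (\<lambda>x. (x powr -\<alpha> - C) * (frechet_pdf \<alpha> x * order_weight (frechet_cdf \<alpha>) (\<lambda>x. x powr -\<alpha>) n m x))
    \<and> (LINT x:{0<..}|lborel.
           (x powr -\<alpha> - C) * (frechet_pdf \<alpha> x * order_weight (frechet_cdf \<alpha>) (\<lambda>x. x powr -\<alpha>) n m x)) = 0"
proof -
  define k where "k = real (n + 2 - m)"
  have k: "0 < k" "real m = C * k"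
    using assms by (simp_all add: k_def C_def)
  let ?\<rho> = "\<lambda>u. u ^ (m - 1) * exp (- (k * u))"
  have zero: "set_integrable lborel {0<..} (\<lambda>x. (x powr -\<alpha> - C) * (\<alpha> * x powr (-(\<alpha> + 1)) * ?\<rho> (x powr -\<alpha>)))
    \<and> (LINT x:{0<..}|lborel. (x powr -\<alpha> - C) * (\<alpha> * x powr (-(\<alpha> + 1)) * ?\<rho> (x powr -\<alpha>))) = 0"
  proof (rule set_integral_powr_substitution_eq_0[where \<phi> = "\<lambda>u. u ^ m * exp (- (k * u)) / k"])
    show "0 < C" "0 < C powr (-1 / \<alpha>)"
      using assms by (simp_all add: C_def)
    fix u :: real
    have "u ^ m = u * u ^ (m - 1)"
      using assms by (simp flip: power_Suc)
    then show "((\<lambda>u. u ^ m * exp (- (k * u)) / k) has_real_derivative (C - u) * ?\<rho> u) (at u)"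
      using k by (auto intro!: derivative_eq_intros simp: field_simps)
    show "isCont ?\<rho> (x powr -\<alpha>)" "0 \<le> ?\<rho> (x powr -\<alpha>)" for x
      by (intro continuous_intros) simp_all
    show "((\<lambda>x. (x powr -\<alpha>) ^ m * exp (- (k * x powr -\<alpha>)) / k) \<longlongrightarrow> 0) (at_right 0)"
      using assms k by real_asymp
    show "((\<lambda>x. (x powr -\<alpha>) ^ m * exp (- (k * x powr -\<alpha>)) / k) \<longlongrightarrow> 0) at_top"
      using assms k by real_asymp
  qed (use assms in simp_all)
  have eq: "frechet_pdf \<alpha> x * order_weight (frechet_cdf \<alpha>) (\<lambda>x. x powr -\<alpha>) n m x
      = \<alpha> * x powr (-(\<alpha> + 1)) * ?\<rho> (x powr -\<alpha>)" if "x \<in> {0<..}" for x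
    using that assms by (simp add: frechet_pdf_mult_order_weight k_def)
  show ?thesis
    by (rule set_integral_eq_0_cong[OF zero]) (simp_all add: eq)
qed

lemma power_tail_model_frechet:
  assumes "1 < \<alpha>"
  shows "power_tail_model \<alpha> 0 (frechet_cdf \<alpha>) (frechet_pdf \<alpha>) (\<lambda>n m. real m / real (n + 2 - m))"
proof
  show "frechet_cdf \<alpha> \<in> borel_measurable borel" "frechet_pdf \<alpha> \<in> borel_measurable borel"
    unfolding frechet_cdf_def frechet_pdf_def by measurable
  show "mono (frechet_cdf \<alpha>)" "mono_on {0<..} (\<lambda>x. frechet_cdf \<alpha> x / x powr -\<alpha>)"
    "mono_on {0<..} (\<lambda>x. (1 - frechet_cdf \<alpha> x) / x powr -\<alpha>)"
    using assms by (simp_all add: frechet_cdf_mono frechet_cdf_div_powr_mono frechet_ccdf_div_powr_mono)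
  show "mono_on {0<..} (\<lambda>x. frechet_cdf \<alpha> (x - \<delta>) / frechet_cdf \<alpha> x)" if "0 \<le> \<delta>" for \<delta>
    using assms that by (simp add: frechet_cdf_shift_ratio_mono)
  show "set_integrable lborel {0<..} (frechet_pdf \<alpha>)"
    using assms by (simp add: frechet_pdf_integrable)
  show "set_integrable lborel {0<..}
          (\<lambda>x. (x powr -\<alpha> - real m / real (n + 2 - m))
               * (frechet_pdf \<alpha> x * order_weight (frechet_cdf \<alpha>) (\<lambda>x. x powr -\<alpha>) n m x))
      \<and> (LINT x:{0<..}|lborel. (x powr -\<alpha> - real m / real (n + 2 - m))
               * (frechet_pdf \<alpha> x * order_weight (frechet_cdf \<alpha>) (\<lambda>x. x powr -\<alpha>) n m x)) = 0"
    if "1 \<le> m" "m \<le> n + 1" for n m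
    using assms that by (intro frechet_moment_eq) auto
qed (use assms in \<open>auto simp: frechet_cdf_def frechet_pdf_def\<close>)

lemma J_frechet_div_phi_frechet_le:
  assumes "1 \<le> m" "1 < \<alpha>" "i < d" "bij_betw \<pi> {..<d} {1..d}"
    and "\<forall>j<d. \<forall>k<d. lam j < lam k \<longrightarrow> \<pi> j < \<pi> k" "\<pi> i = \<sigma>"
  shows "J_frechet \<alpha> d m lam i / phi_frechet \<alpha> d m lam i
           \<le> ((real (min \<sigma> m) + 1 / \<alpha>) / max (real \<sigma> - real m + 1) 1) powr (1 / \<alpha>)"
proof -
  have "1 \<le> \<sigma>"
    using bij_betw_apply[OF assms(4)] assms(3,6) by auto
  have "J_frechet \<alpha> d m lam i / phi_frechet \<alpha> d m lam i
      \<le> (if m \<le> \<sigma> then real m / real (\<sigma> - 1 + 2 - m) else real 1 / real (0 + 2 - 1)) powr (1 / \<alpha>)"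
    using power_tail_model.J_gen_div_phi_gen_le_rank[OF power_tail_model_frechet[OF assms(2)] assms(1,3-5)]
    unfolding J_frechet_def phi_frechet_def assms(6) .
  also have "\<dots> \<le> ((real (min \<sigma> m) + 1 / \<alpha>) / max (real \<sigma> - real m + 1) 1) powr (1 / \<alpha>)"
  proof (rule powr_mono2)
    show "(if m \<le> \<sigma> then real m / real (\<sigma> - 1 + 2 - m) else real 1 / real (0 + 2 - 1))
        \<le> (real (min \<sigma> m) + 1 / \<alpha>) / max (real \<sigma> - real m + 1) 1"
    proof (cases "m \<le> \<sigma>")
      case True
      have "real m / (real \<sigma> - real m + 1) \<le> (real m + 1 / \<alpha>) / (real \<sigma> - real m + 1)"
        using True assms(2) by (intro divide_right_mono) auto
      then show ?thesis
        using True \<open>1 \<le> \<sigma>\<close> by (simp add: of_nat_diff algebra_simps)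
    next
      case False
      have "0 < 1 / \<alpha>" "1 \<le> real \<sigma>"
        using assms(2) \<open>1 \<le> \<sigma>\<close> by simp_all
      then have "1 \<le> real \<sigma> + 1 / \<alpha>"
        by linarith
      then show ?thesis
        using False by simp
    qed
  qed (use assms(2) in simp_all)
  finally show ?thesis .
qed

section \<open>The Pareto distribution\<close>

lemma convex_on_neg_ln_one_minus_powr_neg:
  assumes "0 < \<alpha>"
  shows "convex_on {1<..} (\<lambda>t::real. - ln (1 - t powr -\<alpha>))"
proof (rule convex_onI)
  fix t x y :: real assume t: "0 < t" "t < 1" and xy: "x \<in> {1<..}" "y \<in> {1<..}"
  have pos: "0 < 1 - z powr -\<alpha>" if "1 < z" for z
    using powr_less_mono2_neg[of "-\<alpha>" 1 z] that assms by simp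
  \<comment> \<open>\<open>1 - t powr -\<alpha>\<close> is concave and positive, so its logarithm is concave\<close>
  have "(1 - t) * (1 - x powr -\<alpha>) + t * (1 - y powr -\<alpha>) \<le> 1 - ((1 - t) *\<^sub>R x + t *\<^sub>R y) powr -\<alpha>"
    using convex_onD[OF convex_on_powr_neg, of \<alpha> t x y] assms t xy by (simp add: algebra_simps)
  moreover have "(1 - t) * ln (1 - x powr -\<alpha>) + t * ln (1 - y powr -\<alpha>)
      \<le> ln ((1 - t) * (1 - x powr -\<alpha>) + t * (1 - y powr -\<alpha>))"
    using concave_onD[OF ln_concave, of t "1 - x powr -\<alpha>" "1 - y powr -\<alpha>"] t xy pos by simp
  moreover have "0 < (1 - t) * (1 - x powr -\<alpha>) + t * (1 - y powr -\<alpha>)"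
    using t xy pos[of x] pos[of y] by (intro add_pos_pos mult_pos_pos) auto
  ultimately have "(1 - t) * ln (1 - x powr -\<alpha>) + t * ln (1 - y powr -\<alpha>)
      \<le> ln (1 - ((1 - t) *\<^sub>R x + t *\<^sub>R y) powr -\<alpha>)"
    by (smt (verit) ln_le_cancel_iff)
  then show "- ln (1 - ((1 - t) *\<^sub>R x + t *\<^sub>R y) powr -\<alpha>)
      \<le> (1 - t) * - ln (1 - x powr -\<alpha>) + t * - ln (1 - y powr -\<alpha>)"
    by simp
qed (simp add: convex_real_interval)

lemma pareto_cdf_bounds:
  assumes "0 \<le> \<alpha>"
  shows "0 \<le> pareto_cdf \<alpha> x \<and> pareto_cdf \<alpha> x \<le> 1"
  using assms powr_mono2'[of "-\<alpha>" 1 x] by (simp add: pareto_cdf_def)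

lemma pareto_cdf_pos:
  assumes "0 < \<alpha>" "1 < x"
  shows "0 < pareto_cdf \<alpha> x"
  using assms powr_less_mono2_neg[of "-\<alpha>" 1 x] by (simp add: pareto_cdf_def)

lemma pareto_cdf_mono:
  assumes "0 \<le> \<alpha>"
  shows "mono (pareto_cdf \<alpha>)"
proof (rule monoI)
  fix x y :: real assume "x \<le> y"
  then show "pareto_cdf \<alpha> x \<le> pareto_cdf \<alpha> y"
    using assms powr_mono2'[of "-\<alpha>" x y] pareto_cdf_bounds[OF assms, of y]
    by (auto simp: pareto_cdf_def)
qed

lemma pareto_cdf_shift_ratio_mono:
  assumes "0 < \<alpha>" "0 \<le> \<delta>"
  shows "mono_on {1<..} (\<lambda>x. pareto_cdf \<alpha> (x - \<delta>) / pareto_cdf \<alpha> x)"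
proof (rule mono_on_shift_ratio_of_convex[OF convex_on_neg_ln_one_minus_powr_neg[OF assms(1)] _ _ assms(2)])
  show "pareto_cdf \<alpha> t = exp (- (- ln (1 - t powr -\<alpha>)))" if "1 < t" for t
    using pareto_cdf_pos[OF assms(1) that] that by (simp add: pareto_cdf_def)
qed (auto simp: pareto_cdf_def)

lemma pareto_cdf_div_powr_mono:
  assumes "0 \<le> \<alpha>"
  shows "mono_on {1<..} (\<lambda>x. pareto_cdf \<alpha> x / x powr -\<alpha>)"
proof -
  have "mono_on {1<..} (\<lambda>x. pareto_cdf \<alpha> x * x powr \<alpha>)"
  proof (rule mono_on_mul)
    show "mono_on {1<..} (pareto_cdf \<alpha>)"
      using pareto_cdf_mono[OF assms] by (rule mono_imp_mono_on)
    show "mono_on {1<..} (\<lambda>x. x powr \<alpha>)"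
      using assms by (auto intro!: mono_onI powr_mono2)
  qed (use pareto_cdf_bounds[OF assms] in auto)
  then show ?thesis
    by (rule mono_on_cong) (simp add: powr_minus divide_inverse)
qed

lemma pareto_ccdf_div_powr_mono: "mono_on {1<..} (\<lambda>x. (1 - pareto_cdf \<alpha> x) / x powr -\<alpha>)"
  by (rule mono_on_cong[OF mono_on_const[of _ 1]]) (simp add: pareto_cdf_def)

lemma pareto_pdf_integrable:
  assumes "0 < \<alpha>"
  shows "set_integrable lborel {1<..} (pareto_pdf \<alpha>)"
proof -
  have "set_integrable lborel {1<..} (\<lambda>x. \<alpha> * x powr (-(\<alpha> + 1)))
      \<and> (LINT x:{1<..}|lborel. \<alpha> * x powr (-(\<alpha> + 1))) = 0 - (- 1)"
  proof (rule set_integral_Ioi_FTC_nonneg[where \<Phi> = "\<lambda>x. - (x powr -\<alpha>)"])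
    fix x :: real assume "1 < x"
    then show "((\<lambda>x. - (x powr -\<alpha>)) has_real_derivative \<alpha> * x powr (-(\<alpha> + 1))) (at x)"
      using DERIV_minus[OF has_real_derivative_powr[of x "-\<alpha>"]] by simp
    show "isCont (\<lambda>x. \<alpha> * x powr (-(\<alpha> + 1))) x"
      using \<open>1 < x\<close> by (intro continuous_intros) auto
  qed (use assms in \<open>simp_all, real_asymp+\<close>)
  then show ?thesis
    by (subst set_integrable_cong[OF refl refl]) (auto simp: pareto_pdf_def)
qed

lemma pareto_pdf_mult_order_weight:
  assumes "1 < x" "1 \<le> m" "m \<le> n + 1" "0 < \<alpha>"
  shows "pareto_pdf \<alpha> x * order_weight (pareto_cdf \<alpha>) (\<lambda>x. x powr -\<alpha>) n m x
           = \<alpha> * x powr (-(\<alpha> + 1)) * ((x powr -\<alpha>) ^ (m - 1) * (1 - x powr -\<alpha>) ^ (n + 1 - m))"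
proof -
  define u where "u = x powr -\<alpha>"
  have "0 < 1 - u"
    using pareto_cdf_pos[OF assms(4,1)] assms(1) by (simp add: pareto_cdf_def u_def)
  moreover have "(1 - u) ^ n = (1 - u) ^ (n + 1 - m) * (1 - u) ^ (m - 1)"
    using assms by (simp flip: power_add)
  ultimately have "(1 - u) ^ n * (u / (1 - u)) ^ (m - 1) = u ^ (m - 1) * (1 - u) ^ (n + 1 - m)"
    by (simp add: power_divide field_simps)
  then show ?thesis
    using assms by (simp add: pareto_pdf_def pareto_cdf_def order_weight_def u_def)
qed

lemma pareto_moment_antiderivative:
  fixes u N :: real
  assumes "1 \<le> m" "N = real m + real j + 1"
  shows "((\<lambda>u. u ^ m * (1 - u) ^ Suc j / N) has_real_derivative
           (real m / N - u) * (u ^ (m - 1) * (1 - u) ^ j)) (at u)"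
proof -
  have "((\<lambda>u. u ^ m * (1 - u) ^ Suc j) has_real_derivative
      real m * u ^ (m - 1) * (1 - u) ^ Suc j - u ^ m * (real (Suc j) * (1 - u) ^ j)) (at u)"
    by (auto intro!: derivative_eq_intros) (cases j; simp add: algebra_simps)
  then have deriv: "((\<lambda>u. u ^ m * (1 - u) ^ Suc j / N) has_real_derivative
      (real m * u ^ (m - 1) * (1 - u) ^ Suc j - u ^ m * (real (Suc j) * (1 - u) ^ j)) / N) (at u)"
    by (rule DERIV_cdivide)
  have "u ^ m = u * u ^ (m - 1)"
    using assms by (simp flip: power_Suc)
  then have "real m * u ^ (m - 1) * (1 - u) ^ Suc j - u ^ m * (real (Suc j) * (1 - u) ^ j)
      = (real m - N * u) * (u ^ (m - 1) * (1 - u) ^ j)"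
    unfolding assms(2) by (simp add: algebra_simps)
  moreover have "0 < N"
    using assms by simp
  ultimately show ?thesis
    using deriv by (simp add: field_simps)
qed

lemma pareto_moment_eq:
  assumes "0 < \<alpha>" "1 \<le> m" "m \<le> n + 1"
  defines "C \<equiv> real m / real (n + 2)"
  shows "set_integrable lborel {1<..}
           (\<lambda>x. (x powr -\<alpha> - C) * (pareto_pdf \<alpha> x * order_weight (pareto_cdf \<alpha>) (\<lambda>x. x powr -\<alpha>) n m x))
    \<and> (LINT x:{1<..}|lborel.
           (x powr -\<alpha> - C) * (pareto_pdf \<alpha> x * order_weight (pareto_cdf \<alpha>) (\<lambda>x. x powr -\<alpha>) n m x)) = 0"
proof -
  define j N where "j = n + 1 - m" and "N = real (n + 2)"
  have N: "0 < N" "N = real m + real j + 1"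
    using assms by (simp_all add: N_def j_def)
  let ?\<rho> = "\<lambda>u. u ^ (m - 1) * (1 - u) ^ j"
  have zero: "set_integrable lborel {1<..} (\<lambda>x. (x powr -\<alpha> - C) * (\<alpha> * x powr (-(\<alpha> + 1)) * ?\<rho> (x powr -\<alpha>)))
    \<and> (LINT x:{1<..}|lborel. (x powr -\<alpha> - C) * (\<alpha> * x powr (-(\<alpha> + 1)) * ?\<rho> (x powr -\<alpha>))) = 0"
  proof (rule set_integral_powr_substitution_eq_0[where \<phi> = "\<lambda>u. u ^ m * (1 - u) ^ Suc j / N"])
    have "0 < C" "C < 1"
      using assms by (simp_all add: C_def)
    then show "0 < C" "1 < C powr (-1 / \<alpha>)"
      using powr_less_mono2_neg[of "-1 / \<alpha>" C 1] assms by simp_all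
    show "((\<lambda>u. u ^ m * (1 - u) ^ Suc j / N) has_real_derivative (C - u) * ?\<rho> u) (at u)" for u
      using pareto_moment_antiderivative[OF assms(2) N(2), of u] by (simp add: C_def N_def)
  next
    show "isCont ?\<rho> (x powr -\<alpha>)" "0 \<le> ?\<rho> (x powr -\<alpha>)" if "1 < x" for x
      using powr_mono2'[of "-\<alpha>" 1 x] that assms by (auto intro!: continuous_intros)
    have "((\<lambda>x. x powr -\<alpha>) \<longlongrightarrow> 1) (at_right 1)" "((\<lambda>x. x powr -\<alpha>) \<longlongrightarrow> 0) at_top"
      using assms by real_asymp+
    then have "((\<lambda>x. (x powr -\<alpha>) ^ m * (1 - x powr -\<alpha>) ^ Suc j / N) \<longlongrightarrow> 1 ^ m * (1 - 1) ^ Suc j / N) (at_right 1)"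
      "((\<lambda>x. (x powr -\<alpha>) ^ m * (1 - x powr -\<alpha>) ^ Suc j / N) \<longlongrightarrow> 0 ^ m * (1 - 0) ^ Suc j / N) at_top"
      by (intro tendsto_intros; use N(1) in simp)+
    then show "((\<lambda>x. (x powr -\<alpha>) ^ m * (1 - x powr -\<alpha>) ^ Suc j / N) \<longlongrightarrow> 0) (at_right 1)"
      "((\<lambda>x. (x powr -\<alpha>) ^ m * (1 - x powr -\<alpha>) ^ Suc j / N) \<longlongrightarrow> 0) at_top"
      using assms by (simp_all add: power_0_left)
  qed (use assms in simp_all)
  have eq: "pareto_pdf \<alpha> x * order_weight (pareto_cdf \<alpha>) (\<lambda>x. x powr -\<alpha>) n m x
      = \<alpha> * x powr (-(\<alpha> + 1)) * ?\<rho> (x powr -\<alpha>)" if "x \<in> {1<..}" for x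
    using that assms by (simp add: pareto_pdf_mult_order_weight j_def)
  show ?thesis
    by (rule set_integral_eq_0_cong[OF zero]) (simp_all add: eq)
qed

lemma power_tail_model_pareto:
  assumes "1 < \<alpha>"
  shows "power_tail_model \<alpha> 1 (pareto_cdf \<alpha>) (pareto_pdf \<alpha>) (\<lambda>n m. real m / real (n + 2))"
proof
  show "pareto_cdf \<alpha> \<in> borel_measurable borel" "pareto_pdf \<alpha> \<in> borel_measurable borel"
    unfolding pareto_cdf_def pareto_pdf_def by measurable
  show "0 \<le> pareto_cdf \<alpha> x \<and> pareto_cdf \<alpha> x \<le> 1" "1 < x \<Longrightarrow> 0 < pareto_cdf \<alpha> x" for x
    using assms by (simp_all add: pareto_cdf_bounds pareto_cdf_pos)
  show "mono (pareto_cdf \<alpha>)" "mono_on {1<..} (\<lambda>x. pareto_cdf \<alpha> x / x powr -\<alpha>)"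
    "mono_on {1<..} (\<lambda>x. (1 - pareto_cdf \<alpha> x) / x powr -\<alpha>)"
    using assms by (simp_all add: pareto_cdf_mono pareto_cdf_div_powr_mono pareto_ccdf_div_powr_mono)
  show "mono_on {1<..} (\<lambda>x. pareto_cdf \<alpha> (x - \<delta>) / pareto_cdf \<alpha> x)" if "0 \<le> \<delta>" for \<delta>
    using assms that by (simp add: pareto_cdf_shift_ratio_mono)
  show "set_integrable lborel {1<..} (pareto_pdf \<alpha>)"
    using assms by (simp add: pareto_pdf_integrable)
  show "1 < (real m / real (n + 2)) powr (-1 / \<alpha>)" if "1 \<le> m" "m \<le> n + 1" for n m
    using that assms powr_less_mono2_neg[of "-1 / \<alpha>" "real m / real (n + 2)" 1] by simp
  show "set_integrable lborel {1<..}
          (\<lambda>x. (x powr -\<alpha> - real m / real (n + 2))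
               * (pareto_pdf \<alpha> x * order_weight (pareto_cdf \<alpha>) (\<lambda>x. x powr -\<alpha>) n m x))
      \<and> (LINT x:{1<..}|lborel. (x powr -\<alpha> - real m / real (n + 2))
               * (pareto_pdf \<alpha> x * order_weight (pareto_cdf \<alpha>) (\<lambda>x. x powr -\<alpha>) n m x)) = 0"
    if "1 \<le> m" "m \<le> n + 1" for n m
    using assms that by (intro pareto_moment_eq) auto
qed (use assms in \<open>auto simp: pareto_pdf_def\<close>)

lemma J_pareto_div_phi_pareto_le:
  assumes "1 \<le> m" "1 < \<alpha>" "i < d" "bij_betw \<pi> {..<d} {1..d}"
    and "\<forall>j<d. \<forall>k<d. lam j < lam k \<longrightarrow> \<pi> j < \<pi> k" "\<pi> i = \<sigma>"
  shows "J_pareto \<alpha> d m lam i / phi_pareto \<alpha> d m lam i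
           \<le> 2 * \<alpha> / (\<alpha> + 1) * ((real (min \<sigma> m) + 1 / \<alpha>) / real \<sigma>) powr (1 / \<alpha>)"
proof -
  have "1 \<le> \<sigma>"
    using bij_betw_apply[OF assms(4)] assms(3,6) by auto
  have "J_pareto \<alpha> d m lam i / phi_pareto \<alpha> d m lam i
      \<le> (if m \<le> \<sigma> then real m / real (\<sigma> - 1 + 2) else real 1 / real (0 + 2)) powr (1 / \<alpha>)"
    using power_tail_model.J_gen_div_phi_gen_le_rank[OF power_tail_model_pareto[OF assms(2)] assms(1,3-5)]
    unfolding J_pareto_def phi_pareto_def assms(6) .
  also have "\<dots> \<le> ((real (min \<sigma> m) + 1 / \<alpha>) / real \<sigma>) powr (1 / \<alpha>)"
  proof (rule powr_mono2)
    show "(if m \<le> \<sigma> then real m / real (\<sigma> - 1 + 2) else real 1 / real (0 + 2))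
        \<le> (real (min \<sigma> m) + 1 / \<alpha>) / real \<sigma>"
      using \<open>1 \<le> \<sigma>\<close> assms(2) by (auto simp: frac_le)
  qed (use assms(2) in simp_all)
  also have "\<dots> \<le> 2 * \<alpha> / (\<alpha> + 1) * ((real (min \<sigma> m) + 1 / \<alpha>) / real \<sigma>) powr (1 / \<alpha>)"
    using assms(2) by (intro mult_le_cancel_right1[THEN iffD2]) simp
  finally show ?thesis .
qed

theorem lemma3:
  fixes \<alpha> :: real and d m i \<sigma> :: nat and lam :: "nat \<Rightarrow> real" and \<pi> :: "nat \<Rightarrow> nat"
  assumes "1 \<le> m" and "m \<le> d"
    and "\<alpha> > 1"
    and "\<forall>j<d. lam j \<ge> 0"
    and "i < d"
    and "bij_betw \<pi> {..<d} {1..d}"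
    and "\<forall>j<d. \<forall>k<d. lam j < lam k \<longrightarrow> \<pi> j < \<pi> k"
    and "\<pi> i = \<sigma>"
  shows "J_frechet \<alpha> d m lam i / phi_frechet \<alpha> d m lam i
           \<le> ((real (min \<sigma> m) + 1 / \<alpha>) / max (real \<sigma> - real m + 1) 1) powr (1 / \<alpha>)
       \<and> J_pareto \<alpha> d m lam i / phi_pareto \<alpha> d m lam i
           \<le> 2 * \<alpha> / (\<alpha> + 1) * ((real (min \<sigma> m) + 1 / \<alpha>) / real \<sigma>) powr (1 / \<alpha>)"
proof -
  show ?thesis
    using J_frechet_div_phi_frechet_le[of m \<alpha> i d \<pi> lam \<sigma>]
      J_pareto_div_phi_pareto_le[of m \<alpha> i d \<pi> lam \<sigma>] assms
    by blast
qed

end
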